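(* Let $d\neq1,3$ be a positive square-free integer, $K=\mathbb{Q}(\sqrt{-d})$ with ring of integers $\mathcal{O}$, and let $\mathcal{J}$ be the set of proper nonzero ideals $\pi$ of $\mathcal{O}$ with $\pi,\overline\pi$ coprime and $\pi^2$ principal. For $\pi\in\mathcal{J}$ let $a(\pi)>0$ and $b(\pi)$ be the unique integers such that $a(\pi)+b(\pi)\sqrt{-d}$ generates the ideal $2\pi^2$, and set $\theta(\pi)=(N_{K/\mathbb{Q}}(\pi),a(\pi),b(\pi))$. Consider the equation $(\mathcal{E})$: $4n^2=a^2+db^2$ with integers $n>0$, $a>0$, $b\neq0$; a solution is primitive if $\gcd(n,a)=1$. Then $\theta$ is a bijection from $\mathcal{J}$ onto the set of primitive solutions of $(\mathcal{E})$. In particular $$F(d)=\min\{n : (n,a,b)\text{ is a solution of }(\mathcal{E})\}.$$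
   Context: $F(d)=\min_{z\in K_1\setminus R}d(z)$, where $R$ is the set of roots of unity in $K$, $K_1=\{z\in K: z\overline z=1\}$, and for $z\in K^*$, $d(z)=N_{K/\mathbb{Q}}(\pi_z)$ with $\pi_z=\{a\in\mathcal{O}: az\in\mathcal{O}\}$. *)

theory Defs
  imports Complex_Main "HOL-Computational_Algebra.Polynomial" "HOL-Computational_Algebra.Squarefree"
begin

text \<open>Model the imaginary quadratic field K = Q(sqrt(-d)) as a subset of the complex numbers,
  with sqrt(-d) = i * sqrt d.\<close>

definition sqm :: "nat \<Rightarrow> complex" where
  "sqm d = \<i> * complex_of_real (sqrt (real d))"

definition QF :: "nat \<Rightarrow> complex set" where
  "QF d = {complex_of_real x + complex_of_real y * sqm d | x y. x \<in> \<rat> \<and> y \<in> \<rat>}"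

definition OK :: "nat \<Rightarrow> complex set" where
  "OK d = {z \<in> QF d. algebraic_int z}"

definition is_ideal :: "nat \<Rightarrow> complex set \<Rightarrow> bool" where
  "is_ideal d I \<longleftrightarrow> I \<subseteq> OK d \<and> 0 \<in> I \<and> (\<forall>x\<in>I. \<forall>y\<in>I. x + y \<in> I)
     \<and> (\<forall>r\<in>OK d. \<forall>x\<in>I. r * x \<in> I)"

definition ideal_mult :: "nat \<Rightarrow> complex set \<Rightarrow> complex set \<Rightarrow> complex set" where
  "ideal_mult d I J = \<Inter> {L. is_ideal d L \<and> {x * y | x y. x \<in> I \<and> y \<in> J} \<subseteq> L}"

definition principal :: "nat \<Rightarrow> complex set \<Rightarrow> bool" where
  "principal d I \<longleftrightarrow> (\<exists>g\<in>OK d. I = {g * x | x. x \<in> OK d})"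

definition coprime_ideals :: "nat \<Rightarrow> complex set \<Rightarrow> complex set \<Rightarrow> bool" where
  "coprime_ideals d I J \<longleftrightarrow> {x + y | x y. x \<in> I \<and> y \<in> J} = OK d"

definition ideal_norm :: "nat \<Rightarrow> complex set \<Rightarrow> nat" where
  "ideal_norm d I = card {{y \<in> OK d. x - y \<in> I} | x. x \<in> OK d}"

definition Jset :: "nat \<Rightarrow> complex set set" where
  "Jset d = {P. is_ideal d P \<and> P \<noteq> {0} \<and> P \<noteq> OK d
       \<and> coprime_ideals d P (cnj ` P) \<and> principal d (ideal_mult d P P)}"

definition two_sq :: "nat \<Rightarrow> complex set \<Rightarrow> complex set" where
  "two_sq d P = ideal_mult d {2 * x | x. x \<in> OK d} (ideal_mult d P P)"

definition ab_of :: "nat \<Rightarrow> complex set \<Rightarrow> int \<times> int" where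
  "ab_of d P = (THE (a, b). a > 0 \<and>
      two_sq d P = {(of_int a + of_int b * sqm d) * x | x. x \<in> OK d})"

definition theta :: "nat \<Rightarrow> complex set \<Rightarrow> int \<times> int \<times> int" where
  "theta d P = (int (ideal_norm d P), fst (ab_of d P), snd (ab_of d P))"

definition is_solution :: "nat \<Rightarrow> int \<times> int \<times> int \<Rightarrow> bool" where
  "is_solution d s \<longleftrightarrow> (case s of (n, a, b) \<Rightarrow>
      n > 0 \<and> a > 0 \<and> b \<noteq> 0 \<and> 4 * n ^ 2 = a ^ 2 + int d * b ^ 2)"

definition primitive_solutions :: "nat \<Rightarrow> (int \<times> int \<times> int) set" where
  "primitive_solutions d = {(n, a, b). is_solution d (n, a, b) \<and> gcd n a = 1}"

definition roots_unity :: "nat \<Rightarrow> complex set" where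
  "roots_unity d = {z \<in> QF d. \<exists>k::nat. k > 0 \<and> z ^ k = 1}"

definition K1 :: "nat \<Rightarrow> complex set" where
  "K1 d = {z \<in> QF d. z * cnj z = 1}"

definition denom_ideal :: "nat \<Rightarrow> complex \<Rightarrow> complex set" where
  "denom_ideal d z = {a \<in> OK d. a * z \<in> OK d}"

definition dz :: "nat \<Rightarrow> complex \<Rightarrow> nat" where
  "dz d z = ideal_norm d (denom_ideal d z)"

definition Fd :: "nat \<Rightarrow> nat" where
  "Fd d = (LEAST m. \<exists>z \<in> K1 d - roots_unity d. m = dz d z)"

end

theory Submission
  imports Defs
begin

text \<open>For \<open>\<pi> \<in> J\<close> write \<open>\<pi>\<^sup>2 = (g)\<close>. Being coprime to its conjugate, \<open>\<pi>\<close> is a lattice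
  \<open>\<int>e + \<int>(c + \<omega>)\<close> with \<open>e = N(\<pi>)\<close>; one shows \<open>\<pi> = (e, g)\<close> and, since \<open>\<plusminus>1\<close> are the
  only units when \<open>d \<noteq> 1, 3\<close>, \<open>g cnj g = e\<^sup>2\<close>. Then \<open>2\<pi>\<^sup>2 = (2g)\<close> with
  \<open>2g = a + b\<surd>-d\<close>, the trace \<open>a\<close> of \<open>g\<close> is coprime to \<open>e\<close>, and \<open>4e\<^sup>2 = a\<^sup>2 + db\<^sup>2\<close>;
  moreover \<open>\<pi> = (e, (a + b\<surd>-d)/2)\<close> is determined by \<open>\<theta>(\<pi>)\<close>. Conversely a primitive
  solution gives \<open>g = (a + b\<surd>-d)/2 \<in> \<O>\<close> of norm \<open>n\<^sup>2\<close>, and \<open>\<pi> = (n, g)\<close> is a lattice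
  ideal in \<open>J\<close> with \<open>\<pi>\<^sup>2 = (g)\<close>.

  For \<open>F(d)\<close>: if \<open>z \<in> K\<^sub>1\<close> is not a root of unity, the least positive integer \<open>m\<close> in
  \<open>\<pi>\<^sub>z\<close> gives a solution \<open>(m, a, b)\<close> with \<open>m \<le> N(\<pi>\<^sub>z)\<close>. A least solution is primitive, so
  it is \<open>\<theta>(\<pi>)\<close> for some \<open>\<pi> \<in> J\<close>, and \<open>z = cnj g / e\<close> has \<open>\<pi>\<^sub>z = \<pi>\<close>.\<close>

section \<open>Monic rational divisors of monic integer polynomials\<close>

lemma map_poly_add_hom:
  fixes f :: "'a::comm_ring_1 \<Rightarrow> 'b::comm_ring_1"
  assumes "\<And>a b. f (a + b) = f a + f b" "f 0 = 0"
  shows "map_poly f (p + q) = map_poly f p + map_poly f q"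
  by (rule poly_eqI) (simp add: coeff_map_poly assms)

lemma map_poly_smult_hom:
  fixes f :: "'a::comm_ring_1 \<Rightarrow> 'b::comm_ring_1"
  assumes "\<And>a b. f (a * b) = f a * f b" "f 0 = 0"
  shows "map_poly f (smult c p) = smult (f c) (map_poly f p)"
  by (rule poly_eqI) (simp add: coeff_map_poly assms)

lemma map_poly_mult_hom:
  fixes f :: "'a::comm_ring_1 \<Rightarrow> 'b::comm_ring_1"
  assumes "\<And>a b. f (a + b) = f a + f b" "\<And>a b. f (a * b) = f a * f b" "f 0 = 0"
  shows "map_poly f (p * q) = map_poly f p * map_poly f q"
proof (induction p rule: pCons_induct)
  case (pCons a p)
  have "map_poly f (pCons a p * q) = map_poly f (smult a q + pCons 0 (p * q))"
    by simp
  also have "\<dots> = smult (f a) (map_poly f q) + pCons 0 (map_poly f p * map_poly f q)"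
    by (simp add: map_poly_add_hom[OF assms(1,3)] map_poly_smult_hom[OF assms(2,3)]
          map_poly_pCons assms(3) pCons.IH)
  also have "\<dots> = map_poly f (pCons a p) * map_poly f q"
    by (simp add: map_poly_pCons assms(3))
  finally show ?case .
qed simp

lemma map_poly_of_int_mult:
  "(map_poly of_int (p * q) :: 'a::comm_ring_1 poly) = map_poly of_int p * map_poly of_int q"
  by (rule map_poly_mult_hom) simp_all

lemma map_poly_of_rat_mult:
  "(map_poly of_rat (p * q) :: 'a::field_char_0 poly) = map_poly of_rat p * map_poly of_rat q"
  by (rule map_poly_mult_hom) (simp_all add: of_rat_add of_rat_mult)

lemma map_poly_of_rat_add:
  "(map_poly of_rat (p + q) :: 'a::field_char_0 poly) = map_poly of_rat p + map_poly of_rat q"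
  by (rule map_poly_add_hom) (simp_all add: of_rat_add)

lemma rat_poly_clear_denominators:
  fixes f :: "rat poly"
  obtains D g where "D > (0::int)" "map_poly of_int g = smult (of_int D) f"
proof -
  have "\<exists>D g. D > (0::int) \<and> map_poly of_int g = smult (of_int D) f"
  proof (induction f rule: pCons_induct)
    case 0
    show ?case by (rule exI[of _ 1], rule exI[of _ 0]) simp
  next
    case (pCons a f)
    then obtain D g where Dg: "D > 0" "map_poly of_int g = smult (of_int D) f" by blast
    obtain n m where nm: "m > 0" "a = of_int n / of_int m"
      by (cases a) (auto simp: Fract_of_int_quotient)
    have "map_poly of_int (pCons (n * D) (smult m g)) = smult (of_int (D * m)) (pCons a f)"
      using Dg nm by (simp add: map_poly_pCons map_poly_smult_hom mult.commute)
    moreover have "D * m > 0" using Dg nm by simp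
    ultimately show ?case by blast
  qed
  then show ?thesis using that by blast
qed

lemma map_poly_of_int_rat_inj:
  assumes "(map_poly of_int p :: rat poly) = map_poly of_int q"
  shows "p = q"
proof (rule poly_eqI)
  fix n
  have "coeff (map_poly of_int p :: rat poly) n = coeff (map_poly of_int q) n" using assms by simp
  then show "coeff p n = coeff q n" by (simp add: coeff_map_poly)
qed

lemma content_monic_int_poly: "lead_coeff (p :: int poly) = 1 \<Longrightarrow> content p = 1"
proof -
  assume "lead_coeff p = 1"
  then have "content p dvd 1" using content_dvd_coeff[of p "degree p"] by simp
  then show ?thesis by (metis normalize_content is_unit_normalize normalize_1)
qed

text \<open>Gauss' lemma: clearing denominators in \<open>p = q * s\<close> and comparing contents shows that
  the common denominator of \<open>q\<close> equals its leading coefficient.\<close>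

lemma monic_rat_factor_of_monic_int_poly:
  fixes p :: "int poly" and q :: "rat poly"
  assumes p: "lead_coeff p = 1" and q: "lead_coeff q = 1" and dvd: "q dvd map_poly of_int p"
  shows "coeff q i \<in> \<int>"
proof -
  from dvd obtain s where ps: "map_poly of_int p = q * s" by blast
  obtain D1 g1 where g1: "D1 > 0" "map_poly of_int g1 = smult (of_int D1) q"
    by (rule rat_poly_clear_denominators)
  obtain D2 g2 where g2: "D2 > 0" "map_poly of_int g2 = smult (of_int D2) s"
    by (rule rat_poly_clear_denominators)
  have lp: "lead_coeff (map_poly (of_int :: int \<Rightarrow> rat) p) = 1"
    using p by (simp add: degree_map_poly coeff_map_poly)
  have ls: "lead_coeff s = 1" using ps lp q by (auto simp: lead_coeff_mult)
  have "map_poly of_int (g1 * g2) = smult (of_int (D1 * D2)) (map_poly (of_int :: int \<Rightarrow> rat) p)"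
    by (simp add: map_poly_of_int_mult g1 g2 ps mult_ac)
  also have "\<dots> = map_poly of_int (smult (D1 * D2) p)"
    by (simp add: map_poly_smult_hom)
  finally have "g1 * g2 = smult (D1 * D2) p" by (rule map_poly_of_int_rat_inj)
  then have "content (g1 * g2) = D1 * D2"
    using g1(1) g2(1) by (simp add: content_smult content_monic_int_poly[OF p] abs_mult)
  then have contents: "content g1 * content g2 = D1 * D2" by (simp add: content_mult)
  have "lead_coeff (map_poly (of_int :: int \<Rightarrow> rat) g1) = of_int D1"
    using g1 q by (simp add: degree_map_poly)
  then have lg1: "lead_coeff g1 = D1" by (simp add: degree_map_poly coeff_map_poly)
  have "lead_coeff (map_poly (of_int :: int \<Rightarrow> rat) g2) = of_int D2"
    using g2 ls by (simp add: degree_map_poly)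
  then have lg2: "lead_coeff g2 = D2" by (simp add: degree_map_poly coeff_map_poly)
  have le1: "content g1 \<le> D1" and le2: "content g2 \<le> D2"
    using content_dvd_coeff[of g1 "degree g1"] content_dvd_coeff[of g2 "degree g2"] lg1 lg2 g1(1) g2(1)
    by (simp_all add: zdvd_imp_le)
  have "content g1 \<ge> 0" "content g2 \<ge> 0"
    by (metis normalize_content abs_ge_zero normalize_int_def)+
  then have "content g1 = D1"
    using contents le1 le2 g1(1) g2(1) by (smt (verit) mult_mono mult_strict_right_mono)
  then obtain k where k: "coeff g1 i = D1 * k" using content_dvd_coeff[of g1 i] by (auto elim: dvdE)
  have "of_int D1 * coeff q i = of_int D1 * of_int k"
    using arg_cong[OF g1(2), of "\<lambda>f. coeff f i"] by (auto simp: coeff_map_poly k)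
  then have "coeff q i = of_int k" using g1(1) by simp
  then show ?thesis by simp
qed

section \<open>The ring of integers\<close>

lemma sqm_sq: "sqm d * sqm d = - of_nat d"
proof -
  have "complex_of_real (sqrt (real d)) * complex_of_real (sqrt (real d)) = of_nat d"
    by (simp flip: of_real_mult)
  then show ?thesis unfolding sqm_def
    by (metis i_squared mult.assoc mult.left_commute mult_minus1 of_real_of_nat_eq power2_eq_square)
qed

lemma Re_sqm [simp]: "Re (sqm d) = 0" and Im_sqm [simp]: "Im (sqm d) = sqrt (real d)"
  by (simp_all add: sqm_def)

lemma cnj_sqm [simp]: "cnj (sqm d) = - sqm d"
  by (simp add: sqm_def)

lemma of_rat_complex: "(of_rat r :: complex) = of_real (of_rat r)"
  by (cases r) (simp add: of_rat_rat)

lemma sqm_coords_inj: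
  assumes "d > 0" "of_int a + of_int b * sqm d = of_int a' + of_int b' * sqm d"
  shows "a = a' \<and> b = b'"
  using arg_cong[OF assms(2), of Re] arg_cong[OF assms(2), of Im] assms(1) by simp

text \<open>The remainder of \<open>P\<close> modulo the minimal polynomial is a rational linear polynomial
  vanishing at a non-real number, hence zero.\<close>

lemma quadratic_min_poly_dvd:
  fixes P :: "rat poly" and x y :: rat
  assumes root: "poly (map_poly of_rat P) (of_rat x + of_rat y * sqm d) = (0::complex)"
    and "y \<noteq> 0" "d > 0"
  shows "[:x^2 + of_nat d * y^2, -2*x, 1:] dvd P"
proof -
  define z where "z = of_rat x + of_rat y * sqm d"
  define q where "q = [:x^2 + of_nat d * y^2, -2*x, 1:]"
  define E where "E = (\<lambda>f::rat poly. poly (map_poly (of_rat :: rat \<Rightarrow> complex) f) z)"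
  have "E q = (z - of_rat x)^2 + of_nat d * (of_rat y)^2"
    by (simp add: E_def q_def map_poly_pCons of_rat_add of_rat_mult of_rat_power of_rat_minus
        power2_eq_square algebra_simps)
  also have "\<dots> = 0"
    by (simp add: z_def power2_eq_square algebra_simps) (simp add: mult.assoc[symmetric] sqm_sq)
  finally have Eq: "E q = 0" .
  have Em: "E (a * b) = E a * E b" and Ea: "E (a + b) = E a + E b" for a b
    by (simp_all add: E_def map_poly_of_rat_mult map_poly_of_rat_add)
  define r where "r = P mod q"
  have "P = P div q * q + r" by (simp add: r_def)
  then have "E P = E (P div q) * E q + E r" by (metis Ea Em)
  then have Er: "E r = 0" using root Eq by (simp add: E_def z_def)
  have "degree r < 2" using degree_mod_less[of q P] by (cases "r = 0") (auto simp: r_def q_def)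
  then have r: "r = [:coeff r 0, coeff r 1:]"
    by (intro poly_eqI) (auto simp: coeff_pCons coeff_eq_0 split: nat.splits)
  have "E r = of_rat (coeff r 0) + z * of_rat (coeff r 1)"
    by (subst r) (simp add: E_def map_poly_pCons)
  with Er have e: "of_rat (coeff r 0) + z * of_rat (coeff r 1) = 0" by simp
  then have "Im (of_rat (coeff r 0) + z * of_rat (coeff r 1)) = 0" by simp
  then have "of_rat y * sqrt (real d) * of_rat (coeff r 1) = (0::real)"
    by (simp add: z_def of_rat_complex)
  then have "coeff r 1 = 0" using assms(2,3) by simp
  with e r have "r = 0" by simp
  then show ?thesis by (simp add: r_def q_def mod_eq_0_iff_dvd)
qed

text \<open>\<open>\<O> = \<int>[\<omega>]\<close> (see \<open>OK_iff\<close>); \<open>omega_trace\<close> and \<open>omega_norm\<close> are the trace and norm of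
  \<open>\<omega>\<close>, and \<open>2\<omega> = omega_trace + omega_scale \<cdot> \<surd>-d\<close>.\<close>

definition omega :: "nat \<Rightarrow> complex" where
  "omega d = (if d mod 4 = 3 then (1 + sqm d) / 2 else sqm d)"

definition omega_trace :: "nat \<Rightarrow> int" where
  "omega_trace d = (if d mod 4 = 3 then 1 else 0)"

definition omega_norm :: "nat \<Rightarrow> int" where
  "omega_norm d = (if d mod 4 = 3 then (int d + 1) div 4 else int d)"

definition omega_scale :: "nat \<Rightarrow> int" where
  "omega_scale d = (if d mod 4 = 3 then 1 else 2)"

definition of_coords :: "nat \<Rightarrow> int \<Rightarrow> int \<Rightarrow> complex" where
  "of_coords d x y = of_int x + of_int y * omega d"

definition norm_form :: "nat \<Rightarrow> int \<Rightarrow> int \<Rightarrow> int" where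
  "norm_form d x y = x^2 + omega_trace d * x * y + omega_norm d * y^2"

lemma two_omega: "2 * omega d = of_int (omega_trace d) + of_int (omega_scale d) * sqm d"
  by (simp add: omega_def omega_trace_def omega_scale_def)

lemma omega_scale_pos: "omega_scale d > 0"
  by (simp add: omega_scale_def)

lemma omega_discriminant: "4 * omega_norm d - omega_trace d ^ 2 = int d * omega_scale d ^ 2"
proof (cases "d mod 4 = 3")
  case True
  then have "4 * ((int d + 1) div 4) = int d + 1" by presburger
  then show ?thesis using True by (simp add: omega_norm_def omega_trace_def omega_scale_def)
qed (simp add: omega_norm_def omega_trace_def omega_scale_def)

lemma omega_sq: "omega d * omega d = of_int (omega_trace d) * omega d - of_int (omega_norm d)"
proof -
  let ?t = "of_int (omega_trace d) :: complex" and ?s = "of_int (omega_scale d) :: complex"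
  have "4 * (omega d * omega d) = (?t + ?s * sqm d) * (?t + ?s * sqm d)"
    by (simp flip: two_omega)
  also have "\<dots> = ?t^2 + 2 * ?t * ?s * sqm d + ?s^2 * (sqm d * sqm d)"
    by (simp add: power2_eq_square algebra_simps)
  also have "\<dots> = 2 * ?t * (?t + ?s * sqm d) - of_int (omega_trace d ^ 2 + int d * omega_scale d ^ 2)"
    by (simp add: sqm_sq power2_eq_square algebra_simps)
  also have "\<dots> = 2 * ?t * (2 * omega d) - of_int (4 * omega_norm d)"
    by (simp only: two_omega flip: omega_discriminant) simp
  also have "\<dots> = 4 * (?t * omega d - of_int (omega_norm d))"
    by (simp add: algebra_simps)
  finally show ?thesis by (metis mult_cancel_left zero_neq_numeral)
qed

lemma cnj_omega: "cnj (omega d) = of_int (omega_trace d) - omega d"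
  by (simp add: omega_def omega_trace_def complex_eq_iff)

lemma Im_omega: "Im (omega d) = of_int (omega_scale d) * sqrt (real d) / 2"
  by (simp add: omega_def omega_scale_def)

lemma of_coords_eq_iff:
  assumes "d > 0"
  shows "of_coords d x y = of_coords d x' y' \<longleftrightarrow> x = x' \<and> y = y'"
proof
  assume h: "of_coords d x y = of_coords d x' y'"
  have "of_int y * (of_int (omega_scale d) * sqrt (real d) / 2)
      = (of_int y' * (of_int (omega_scale d) * sqrt (real d) / 2) :: real)"
    using arg_cong[OF h, of Im] by (simp add: of_coords_def Im_omega)
  then have "y = y'" using assms omega_scale_pos[of d] by simp
  with h show "x = x' \<and> y = y'" by (simp add: of_coords_def)
qed simp

lemma of_coords_add: "of_coords d x y + of_coords d x' y' = of_coords d (x + x') (y + y')"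
  and of_coords_minus: "- of_coords d x y = of_coords d (-x) (-y)"
  and of_coords_diff: "of_coords d x y - of_coords d x' y' = of_coords d (x - x') (y - y')"
  and of_coords_smult: "of_int k * of_coords d x y = of_coords d (k * x) (k * y)"
  and of_int_eq_of_coords: "of_int k = of_coords d k 0"
  and omega_eq_of_coords: "omega d = of_coords d 0 1"
  by (simp_all add: of_coords_def algebra_simps)

lemma of_coords_mult:
  "of_coords d x y * of_coords d x' y'
     = of_coords d (x * x' - omega_norm d * y * y') (x * y' + y * x' + omega_trace d * y * y')"
proof -
  have "of_coords d x y * of_coords d x' y'
      = of_int (x * x') + of_int (x * y' + y * x') * omega d + of_int (y * y') * (omega d * omega d)"
    by (simp add: of_coords_def algebra_simps)
  then show ?thesis by (simp add: omega_sq of_coords_def algebra_simps)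
qed

lemma cnj_of_coords: "cnj (of_coords d x y) = of_coords d (x + omega_trace d * y) (- y)"
  by (simp add: of_coords_def cnj_omega algebra_simps)

lemma two_of_coords:
  "2 * of_coords d x y = of_int (2 * x + omega_trace d * y) + of_int (omega_scale d * y) * sqm d"
proof -
  have "2 * of_coords d x y = 2 * of_int x + of_int y * (2 * omega d)"
    by (simp add: of_coords_def algebra_simps)
  also have "\<dots> = of_int (2 * x + omega_trace d * y) + of_int (omega_scale d * y) * sqm d"
    by (simp only: two_omega) (simp add: algebra_simps)
  finally show ?thesis .
qed

lemma of_coords_mult_cnj: "of_coords d x y * cnj (of_coords d x y) = of_int (norm_form d x y)"
proof -
  have "of_coords d x y * cnj (of_coords d x y) = of_coords d (x * (x + omega_trace d * y)
      - omega_norm d * y * (- y)) (x * (- y) + y * (x + omega_trace d * y) + omega_trace d * y * (- y))"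
    by (simp only: cnj_of_coords of_coords_mult)
  also have "\<dots> = of_coords d (norm_form d x y) 0"
    by (simp add: norm_form_def algebra_simps power2_eq_square)
  finally show ?thesis by (simp add: of_coords_def)
qed

lemma of_coords_add_cnj: "of_coords d x y + cnj (of_coords d x y) = of_int (2 * x + omega_trace d * y)"
proof -
  have "of_coords d x y + cnj (of_coords d x y) = of_coords d (x + (x + omega_trace d * y)) (y + - y)"
    by (simp only: cnj_of_coords of_coords_add)
  then show ?thesis by (simp add: of_coords_def)
qed

lemma four_norm_form:
  "4 * norm_form d x y = (2 * x + omega_trace d * y)^2 + int d * (omega_scale d * y)^2"
proof -
  have "4 * norm_form d x y = (2 * x + omega_trace d * y)^2 + (4 * omega_norm d - omega_trace d ^ 2) * y^2"
    by (simp add: norm_form_def power2_eq_square algebra_simps)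
  then show ?thesis by (simp add: omega_discriminant power_mult_distrib)
qed

lemma squarefree_square_dvd:
  assumes "squarefree d" "(x::int)^2 dvd int d"
  shows "\<bar>x\<bar> = 1"
proof -
  have "int ((nat \<bar>x\<bar>)^2) = x^2" by simp
  with assms(2) have "(nat \<bar>x\<bar>)^2 dvd d" by (metis int_dvd_int_iff)
  then have "nat \<bar>x\<bar> dvd 1" using squarefreeD[OF assms(1)] by blast
  then show ?thesis by simp
qed

lemma squarefree_rat_square_Ints:
  assumes "squarefree d" "of_nat d * r^2 \<in> \<int>"
  shows "(r::rat) \<in> \<int>"
proof -
  obtain a b where ab: "r = of_int a / of_int b" "b > 0" "coprime a b"
    by (cases r) (auto simp: Fract_of_int_quotient)
  from assms(2) obtain k where "of_nat d * r^2 = of_int k" by (auto elim: Ints_cases)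
  then have "of_int (int d * a^2) = (of_int (k * b^2) :: rat)"
    using ab(2) by (simp add: ab(1) field_simps power2_eq_square)
  then have "b^2 dvd int d * a^2" by (simp only: of_int_eq_iff) simp
  moreover have "coprime (b^2) (a^2)" using ab(3) by (simp add: coprime_commute)
  ultimately have "b^2 dvd int d" by (meson coprime_dvd_mult_left_iff)
  then have "b = 1" using squarefree_square_dvd[OF assms(1)] ab(2) by fastforce
  then show ?thesis by (simp add: ab(1))
qed

lemma square_mod_4: "(A::int)^2 mod 4 = A mod 2"
proof (cases "even A")
  case True
  then show ?thesis by (auto elim!: evenE simp: power2_eq_square)
next
  case False
  then obtain a where a: "A = 2 * a + 1" using oddE by blast
  have "A^2 mod 4 = (1 + 4 * (a^2 + a)) mod 4" by (simp add: a power2_eq_square algebra_simps)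
  also have "\<dots> = 1" by (simp only: mod_mult_self2) simp
  finally show ?thesis using False by (simp add: odd_iff_mod_2_eq_one)
qed

lemma squarefree_mod_4: "squarefree (d::nat) \<Longrightarrow> d mod 4 \<noteq> 0"
  using squarefreeD[of d 2] by (auto simp: dvd_eq_mod_eq_0[symmetric])

text \<open>Reducing modulo 4 shows that \<open>A\<close> and \<open>B\<close> are even, or that \<open>d \<equiv> 3\<close> and
  \<open>A \<equiv> B (mod 2)\<close>.\<close>

lemma half_in_coords:
  assumes "squarefree d" "4 dvd A^2 + int d * B^2"
  obtains x y where "(of_int A + of_int B * sqm d) / 2 = of_coords d x y"
proof -
  have "(A^2 + int d * B^2) mod 4 = (A^2 mod 4 + (int d * B^2) mod 4) mod 4"
    by (simp add: mod_add_eq)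
  also have "(int d * B^2) mod 4 = ((int d mod 4) * (B^2 mod 4)) mod 4"
    by (simp add: mod_mult_eq)
  finally have 0: "(A mod 2 + int (d mod 4) * (B mod 2)) mod 4 = 0"
    using assms(2) by (simp add: square_mod_4 zmod_int mod_add_right_eq)
  have A: "A mod 2 = 0 \<or> A mod 2 = 1" and B: "B mod 2 = 0 \<or> B mod 2 = 1" by auto
  show ?thesis
  proof (cases "d mod 4 = 3")
    case True
    then have "A mod 2 = B mod 2" using 0 A B by (elim disjE) simp_all
    then have "2 dvd A - B" by (simp add: mod_eq_dvd_iff)
    then obtain x where "A - B = 2 * x" unfolding dvd_def by blast
    then have "A = B + 2 * x" by simp
    then have "(of_int A + of_int B * sqm d) / 2 = of_coords d x B"
      using True by (simp add: of_coords_def omega_def field_simps)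
    then show ?thesis by (rule that)
  next
    case False
    then have "d mod 4 = 1 \<or> d mod 4 = 2" using squarefree_mod_4[OF assms(1)] by presburger
    then have "A mod 2 = 0 \<and> B mod 2 = 0" using 0 A B by (elim disjE) simp_all
    then have "even A \<and> even B" by presburger
    then obtain x y where "A = 2 * x" "B = 2 * y" by blast
    then have "(of_int A + of_int B * sqm d) / 2 = of_coords d x y"
      using False by (simp add: of_coords_def omega_def)
    then show ?thesis by (rule that)
  qed
qed

lemma of_coords_in_OK: "of_coords d x y \<in> OK d"
proof -
  let ?z = "of_coords d x y"
  have "?z = complex_of_real (of_int x + of_int y * of_int (omega_trace d) / 2)
      + complex_of_real (of_int y * of_int (omega_scale d) / 2) * sqm d"
    using two_of_coords[of d x y] by (simp add: field_simps)
  moreover have "of_int x + of_int y * of_int (omega_trace d) / 2 \<in> \<rat>"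
    "of_int y * of_int (omega_scale d) / 2 \<in> \<rat>" by simp_all
  ultimately have "?z \<in> QF d" unfolding QF_def by blast
  moreover have "algebraic_int ?z"
  proof
    let ?p = "[:of_int (norm_form d x y), - of_int (2 * x + omega_trace d * y), 1:] :: complex poly"
    show "lead_coeff ?p = 1" by simp
    show "\<forall>i. coeff ?p i \<in> \<int>" by (auto simp: coeff_pCons split: nat.splits)
    have "poly ?p ?z = ?z * cnj ?z - (?z + cnj ?z) * ?z + ?z * ?z"
      by (simp add: of_coords_mult_cnj of_coords_add_cnj algebra_simps)
    then show "poly ?p ?z = 0" by (simp add: algebra_simps)
  qed
  ultimately show ?thesis by (simp add: OK_def)
qed

text \<open>The minimal polynomial of a non-rational algebraic integer \<open>z \<in> K\<close> divides a monic integer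
  polynomial, so the trace and the norm of \<open>z\<close> are integers.\<close>

lemma algebraic_int_quadratic_trace_norm:
  fixes x y :: rat
  assumes ai: "algebraic_int (of_rat x + of_rat y * sqm d)" and "y \<noteq> 0" "d > 0"
  shows "-2 * x \<in> \<int>" "x^2 + of_nat d * y^2 \<in> \<int>"
proof -
  from ai obtain p where p: "poly (map_poly of_int p) (of_rat x + of_rat y * sqm d) = 0" "lead_coeff p = 1"
    by (auto simp: algebraic_int_altdef_ipoly)
  have "map_poly (of_rat :: rat \<Rightarrow> complex) (map_poly of_int p) = map_poly of_int p"
    by (simp add: map_poly_map_poly o_def)
  then have "[:x^2 + of_nat d * y^2, -2*x, 1:] dvd map_poly of_int p"
    using quadratic_min_poly_dvd[of "map_poly of_int p" x y d] p(1) assms(2,3) by simp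
  from monic_rat_factor_of_monic_int_poly[OF p(2) _ this, of 1]
    monic_rat_factor_of_monic_int_poly[OF p(2) _ this, of 0]
  show "-2 * x \<in> \<int>" "x^2 + of_nat d * y^2 \<in> \<int>" by simp_all
qed

lemma OK_imp_coords:
  assumes sq: "squarefree d" and z: "z \<in> OK d"
  obtains x y where "z = of_coords d x y"
proof -
  from z obtain r1 r2 where r: "z = complex_of_real r1 + complex_of_real r2 * sqm d" "r1 \<in> \<rat>" "r2 \<in> \<rat>"
    and ai: "algebraic_int z"
    by (auto simp: OK_def QF_def)
  obtain q1 q2 where q: "r1 = of_rat q1" "r2 = of_rat q2" using r(2,3) by (auto elim!: Rats_cases)
  have zq: "z = of_rat q1 + of_rat q2 * sqm d" using r(1) q by (simp add: of_rat_complex)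
  show ?thesis
  proof (cases "q2 = 0")
    case True
    then have "algebraic_int (of_rat q1 :: real)" using ai zq by (simp add: of_rat_complex)
    then have "(of_rat q1 :: real) \<in> \<int>" by (rule rational_algebraic_int_is_int) simp
    then obtain k where "(of_rat q1 :: real) = of_int k" by (auto elim: Ints_cases)
    then have "z = of_coords d k 0" using zq True by (simp add: of_coords_def of_rat_complex)
    then show ?thesis by (rule that)
  next
    case False
    have "d > 0" using sq by (cases d) auto
    then have "-2*q1 \<in> \<int>" "q1^2 + of_nat d * q2^2 \<in> \<int>"
      using algebraic_int_quadratic_trace_norm[of q1 q2 d] ai zq False by simp_all
    then obtain A N where A: "-2*q1 = of_int A" and N: "q1^2 + of_nat d * q2^2 = of_int N"
      by (metis Ints_cases)
    have "of_nat d * (2*q2)^2 = of_int (4 * N - A^2)"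
      by (simp add: power2_eq_square algebra_simps flip: A N)
    then have "of_nat d * (2*q2)^2 \<in> \<int>" by simp
    then have "2 * q2 \<in> \<int>" by (rule squarefree_rat_square_Ints[OF sq])
    then obtain B where B: "2 * q2 = of_int B" by (auto elim: Ints_cases)
    have "of_int ((-A)^2 + int d * B^2) = (of_int (4 * N) :: rat)"
      by (simp add: power2_eq_square algebra_simps flip: A N B)
    then have "4 dvd (-A)^2 + int d * B^2" by (simp only: of_int_eq_iff) simp
    then obtain x y where xy: "(of_int (-A) + of_int B * sqm d) / 2 = of_coords d x y"
      using half_in_coords[OF sq] by blast
    have "(of_rat (2 * q1) :: complex) = of_rat (of_int (-A))" using A by simp
    then have "(of_rat (2 * q1) :: complex) = of_int (-A)" by (simp only: of_rat_of_int_eq)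
    moreover have "(of_rat (2 * q2) :: complex) = of_rat (of_int B)" using B by simp
    then have "(of_rat (2 * q2) :: complex) = of_int B" by (simp only: of_rat_of_int_eq)
    ultimately have "z = (of_int (-A) + of_int B * sqm d) / 2" using zq by (simp add: of_rat_mult field_simps)
    with xy show ?thesis using that by blast
  qed
qed

lemma algebraic_int_root_of_unity: "k > 0 \<Longrightarrow> (z::complex) ^ k = 1 \<Longrightarrow> algebraic_int z"
  by (rule algebraic_int_root[where p = "monom 1 k" and y = 1])
     (auto simp: poly_monom degree_monom_eq intro: int_imp_algebraic_int)

lemma QF_divide_of_int: "x \<in> QF d \<Longrightarrow> x / of_int e \<in> QF d"
proof -
  assume "x \<in> QF d"
  then obtain r1 r2 where r: "x = complex_of_real r1 + complex_of_real r2 * sqm d" "r1 \<in> \<rat>" "r2 \<in> \<rat>"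
    by (auto simp: QF_def)
  have "x / of_int e = complex_of_real (r1 / of_int e) + complex_of_real (r2 / of_int e) * sqm d"
    by (simp add: r add_divide_distrib)
  moreover have "r1 / of_int e \<in> \<rat>" "r2 / of_int e \<in> \<rat>" using r by simp_all
  ultimately show ?thesis unfolding QF_def by blast
qed

lemma QF_denominator:
  assumes "squarefree d" "z \<in> QF d"
  obtains M where "M > 0" "of_int M * z \<in> OK d"
proof -
  obtain q1 q2 where z: "z = of_rat q1 + of_rat q2 * sqm d"
    using assms(2) by (auto simp: QF_def of_rat_complex elim!: Rats_cases)
  obtain a1 b1 a2 b2 where q: "q1 = of_int a1 / of_int b1" "b1 > 0" "q2 = of_int a2 / of_int b2" "b2 > 0"
    by (metis Fract_of_int_quotient quotient_of_unique quotient_of_denom_pos' surj_pair)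
  have "of_int (2 * b1 * b2) * z = (of_int (4 * b2 * a1) + of_int (4 * b1 * a2) * sqm d) / 2"
    using q(2,4) by (simp add: z q(1,3) of_rat_divide field_simps)
  moreover have "4 dvd (4 * b2 * a1)^2 + int d * (4 * b1 * a2)^2" by (simp add: power2_eq_square)
  ultimately have "of_int (2 * b1 * b2) * z \<in> OK d"
    using half_in_coords[OF assms(1)] of_coords_in_OK by metis
  moreover have "2 * b1 * b2 > 0" using q(2,4) by simp
  ultimately show ?thesis using that by blast
qed

locale squarefree_field =
  fixes d :: nat
  assumes squarefree: "squarefree d"
begin

lemma d_pos: "d > 0"
  using squarefree by (cases d) auto

lemma OK_iff: "z \<in> OK d \<longleftrightarrow> (\<exists>x y. z = of_coords d x y)"
  using OK_imp_coords[OF squarefree] of_coords_in_OK by metis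

lemma of_coords_inj [simp]: "of_coords d x y = of_coords d x' y' \<longleftrightarrow> x = x' \<and> y = y'"
  using of_coords_eq_iff[OF d_pos] .

lemma of_coords_eq_0_iff [simp]: "of_coords d x y = 0 \<longleftrightarrow> x = 0 \<and> y = 0"
  using of_coords_inj[of x y 0 0] by (simp add: of_int_eq_of_coords[of 0, symmetric])

lemma OK_add: "x \<in> OK d \<Longrightarrow> y \<in> OK d \<Longrightarrow> x + y \<in> OK d"
  and OK_diff: "x \<in> OK d \<Longrightarrow> y \<in> OK d \<Longrightarrow> x - y \<in> OK d"
  and OK_minus: "x \<in> OK d \<Longrightarrow> - x \<in> OK d"
  and OK_mult: "x \<in> OK d \<Longrightarrow> y \<in> OK d \<Longrightarrow> x * y \<in> OK d"
  and OK_cnj: "x \<in> OK d \<Longrightarrow> cnj x \<in> OK d"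
  by (auto simp: OK_iff of_coords_add of_coords_diff of_coords_minus of_coords_mult cnj_of_coords)

lemma OK_of_int [simp]: "of_int k \<in> OK d"
  and OK_numeral [simp]: "numeral m \<in> OK d"
  and OK_0 [simp]: "0 \<in> OK d"
  and OK_1 [simp]: "1 \<in> OK d"
  and omega_in_OK [simp]: "omega d \<in> OK d"
  using of_coords_in_OK[of d]
  by (metis of_int_eq_of_coords of_int_numeral of_int_0 of_int_1 omega_eq_of_coords)+

lemmas OK_closed = OK_add OK_diff OK_minus OK_mult OK_cnj OK_of_int OK_numeral OK_0 OK_1
  omega_in_OK of_coords_in_OK

lemma of_int_dvd_in_OK:
  assumes "of_int k = of_int q * z" "z \<in> OK d"
  shows "q dvd k"
proof -
  obtain x y where z: "z = of_coords d x y" using assms(2) by (auto simp: OK_iff)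
  have "of_coords d k 0 = of_coords d (q * x) (q * y)"
    using assms(1) by (simp add: z of_coords_smult flip: of_int_eq_of_coords)
  then show ?thesis by simp
qed

lemma norm_form_nonneg: "norm_form d x y \<ge> 0"
proof -
  have "4 * norm_form d x y \<ge> 0" unfolding four_norm_form by simp
  then show ?thesis by simp
qed

lemma norm_form_pos: "(x, y) \<noteq> (0, 0) \<Longrightarrow> norm_form d x y > 0"
proof -
  assume "(x, y) \<noteq> (0, 0)"
  then have "(2 * x + omega_trace d * y)^2 + int d * (omega_scale d * y)^2 > 0"
    using d_pos omega_scale_pos[of d] by (cases "y = 0") (auto intro: add_nonneg_pos)
  then show ?thesis using four_norm_form[of d x y] by simp
qed

lemma squarefree_mult_square_eq_square:
  assumes eq: "int d * B^2 = C^2" and B: "B \<noteq> 0"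
  shows "d = 1"
proof -
  have "C^2 = B^2 * int d" by (simp add: eq[symmetric] mult.commute)
  then have "B^2 dvd C^2" by (rule dvdI)
  then have "B dvd C" by simp
  then obtain k where k: "C = B * k" by (rule dvdE)
  have "B^2 * int d = B^2 * k^2" using eq by (simp add: k power_mult_distrib mult.commute)
  then have dk: "int d = k^2" using B by simp
  then have "\<bar>k\<bar> = 1" using squarefree_square_dvd[OF squarefree, of k] by simp
  then have "k^2 = 1" by (metis abs_power2 power2_abs power_one)
  then show ?thesis using dk by simp
qed

end

section \<open>Ideals\<close>

definition gen_ideal :: "nat \<Rightarrow> complex \<Rightarrow> complex set" where
  "gen_ideal d g = {g * x | x. x \<in> OK d}"

definition gen_ideal2 :: "nat \<Rightarrow> complex \<Rightarrow> complex \<Rightarrow> complex set" where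
  "gen_ideal2 d a b = {a * s + b * t | s t. s \<in> OK d \<and> t \<in> OK d}"

definition coset :: "nat \<Rightarrow> complex set \<Rightarrow> complex \<Rightarrow> complex set" where
  "coset d I x = {y \<in> OK d. x - y \<in> I}"

lemma ideal_norm_eq_card_cosets: "ideal_norm d I = card (coset d I ` OK d)"
  unfolding ideal_norm_def coset_def by (simp add: Setcompr_eq_image)

context squarefree_field
begin

lemma ideal_subset: "is_ideal d I \<Longrightarrow> I \<subseteq> OK d"
  and ideal_0: "is_ideal d I \<Longrightarrow> 0 \<in> I"
  and ideal_add: "is_ideal d I \<Longrightarrow> x \<in> I \<Longrightarrow> y \<in> I \<Longrightarrow> x + y \<in> I"
  and ideal_mult_left: "is_ideal d I \<Longrightarrow> r \<in> OK d \<Longrightarrow> x \<in> I \<Longrightarrow> r * x \<in> I"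
  by (simp_all add: is_ideal_def)

lemma ideal_mult_right: "is_ideal d I \<Longrightarrow> r \<in> OK d \<Longrightarrow> x \<in> I \<Longrightarrow> x * r \<in> I"
  using ideal_mult_left[of I r x] by (simp add: mult.commute)

lemma ideal_of_int_mult: "is_ideal d I \<Longrightarrow> x \<in> I \<Longrightarrow> of_int k * x \<in> I"
  using ideal_mult_left[of I "of_int k" x] by simp

lemma ideal_minus: "is_ideal d I \<Longrightarrow> x \<in> I \<Longrightarrow> - x \<in> I"
  using ideal_of_int_mult[of I x "-1"] by simp

lemma ideal_diff: "is_ideal d I \<Longrightarrow> x \<in> I \<Longrightarrow> y \<in> I \<Longrightarrow> x - y \<in> I"
  using ideal_add[of I x "-y"] ideal_minus[of I y] by simp

lemma ideal_OK: "is_ideal d (OK d)"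
  by (simp add: is_ideal_def OK_add OK_mult)

lemma ideal_eq_OK_if_one: "is_ideal d I \<Longrightarrow> 1 \<in> I \<Longrightarrow> I = OK d"
  using ideal_subset ideal_mult_right[of I _ 1] by fastforce

lemma ideal_colon: "is_ideal d I \<Longrightarrow> is_ideal d {w \<in> OK d. \<forall>c\<in>C. w * c \<in> I}"
  by (simp add: is_ideal_def OK_add OK_mult distrib_right mult.assoc)

lemma ideal_cnj_image:
  assumes I: "is_ideal d I"
  shows "is_ideal d (cnj ` I)"
  unfolding is_ideal_def
proof (intro conjI ballI)
  show "cnj ` I \<subseteq> OK d" using ideal_subset[OF I] OK_cnj by auto
  show "0 \<in> cnj ` I" using ideal_0[OF I] by force
next
  fix x y assume "x \<in> cnj ` I" "y \<in> cnj ` I"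
  then have "cnj x + cnj y \<in> I" using ideal_add[OF I] by auto
  then show "x + y \<in> cnj ` I" by (auto simp: image_iff intro!: bexI[of _ "cnj x + cnj y"])
next
  fix r x assume "r \<in> OK d" "x \<in> cnj ` I"
  then have "cnj r * cnj x \<in> I" using ideal_mult_left[OF I] OK_cnj by auto
  then show "r * x \<in> cnj ` I" by (auto simp: image_iff intro!: bexI[of _ "cnj r * cnj x"])
qed

lemma ideal_Inter: "L0 \<in> F \<Longrightarrow> (\<And>L. L \<in> F \<Longrightarrow> is_ideal d L) \<Longrightarrow> is_ideal d (\<Inter>F)"
  unfolding is_ideal_def by (intro conjI ballI) (simp_all add: Inter_lower subset_trans, blast+)

lemma ideal_gen_ideal: "g \<in> OK d \<Longrightarrow> is_ideal d (gen_ideal d g)"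
  unfolding is_ideal_def gen_ideal_def
proof (intro conjI ballI)
  assume g: "g \<in> OK d"
  show "{g * x |x. x \<in> OK d} \<subseteq> OK d" using g OK_mult by auto
  show "0 \<in> {g * x |x. x \<in> OK d}" by (rule CollectI, rule exI[of _ 0]) simp
  fix x y assume "x \<in> {g * x |x. x \<in> OK d}" "y \<in> {g * x |x. x \<in> OK d}"
  then obtain x' y' where "x = g * x'" "y = g * y'" "x' \<in> OK d" "y' \<in> OK d" by blast
  then have "x + y = g * (x' + y')" "x' + y' \<in> OK d" by (simp_all add: distrib_left OK_add)
  then show "x + y \<in> {g * x |x. x \<in> OK d}" by blast
next
  fix r x assume "r \<in> OK d" "x \<in> {g * x |x. x \<in> OK d}"
  then obtain x' where "x = g * x'" "x' \<in> OK d" by blast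
  then have "r * x = g * (r * x')" "r * x' \<in> OK d" using \<open>r \<in> OK d\<close> by (simp_all add: mult_ac OK_mult)
  then show "r * x \<in> {g * x |x. x \<in> OK d}" by blast
qed

lemma gen_ideal_mem: "x \<in> OK d \<Longrightarrow> g * x \<in> gen_ideal d g"
  by (auto simp: gen_ideal_def)

lemma gen_ideal_self: "g \<in> gen_ideal d g"
  using gen_ideal_mem[of 1 g] by simp

lemma gen_ideal_minus: "gen_ideal d (- g) = gen_ideal d g"
proof -
  have "gen_ideal d (- g) \<subseteq> gen_ideal d g" for g
  proof
    fix z assume "z \<in> gen_ideal d (- g)"
    then obtain t where "z = - g * t" "t \<in> OK d" by (auto simp: gen_ideal_def)
    then have "z = g * (- t)" "- t \<in> OK d" by (simp_all add: OK_minus)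
    then show "z \<in> gen_ideal d g" unfolding gen_ideal_def by blast
  qed
  from this[of g] this[of "- g"] show ?thesis by auto
qed

lemma cnj_gen_ideal: "x \<in> gen_ideal d g \<Longrightarrow> cnj x \<in> gen_ideal d (cnj g)"
  by (auto simp: gen_ideal_def OK_cnj)

lemma gen_ideal_mult:
  assumes "x \<in> gen_ideal d a" "y \<in> gen_ideal d b"
  shows "x * y \<in> gen_ideal d (a * b)"
proof -
  obtain s t where "x = a * s" "y = b * t" "s \<in> OK d" "t \<in> OK d"
    using assms by (auto simp: gen_ideal_def)
  then show ?thesis using gen_ideal_mem[of "s * t" "a * b"] OK_mult by (simp add: mult_ac)
qed

lemma ideal_gen_ideal2: "a \<in> OK d \<Longrightarrow> b \<in> OK d \<Longrightarrow> is_ideal d (gen_ideal2 d a b)"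
  unfolding is_ideal_def gen_ideal2_def
proof (intro conjI ballI)
  assume ab: "a \<in> OK d" "b \<in> OK d"
  show "{a * s + b * t |s t. s \<in> OK d \<and> t \<in> OK d} \<subseteq> OK d" using ab by (auto intro!: OK_closed)
  show "0 \<in> {a * s + b * t |s t. s \<in> OK d \<and> t \<in> OK d}" by (auto intro!: exI[of _ 0])
next
  fix x y assume "x \<in> {a * s + b * t |s t. s \<in> OK d \<and> t \<in> OK d}" "y \<in> {a * s + b * t |s t. s \<in> OK d \<and> t \<in> OK d}"
  then obtain s t s' t' where "x = a * s + b * t" "y = a * s' + b * t'" "s \<in> OK d" "t \<in> OK d" "s' \<in> OK d" "t' \<in> OK d"
    by blast
  then have "x + y = a * (s + s') + b * (t + t')" "s + s' \<in> OK d" "t + t' \<in> OK d"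
    by (simp_all add: algebra_simps OK_add)
  then show "x + y \<in> {a * s + b * t |s t. s \<in> OK d \<and> t \<in> OK d}" by blast
next
  fix r x assume r: "r \<in> OK d" and "x \<in> {a * s + b * t |s t. s \<in> OK d \<and> t \<in> OK d}"
  then obtain s t where "x = a * s + b * t" "s \<in> OK d" "t \<in> OK d" by blast
  then have "r * x = a * (r * s) + b * (r * t)" "r * s \<in> OK d" "r * t \<in> OK d"
    using r by (simp_all add: algebra_simps OK_mult)
  then show "r * x \<in> {a * s + b * t |s t. s \<in> OK d \<and> t \<in> OK d}" by blast
qed

lemma gen_ideal2_left: "a \<in> gen_ideal2 d a b"
  and gen_ideal2_right: "b \<in> gen_ideal2 d a b"
  unfolding gen_ideal2_def
  by (rule CollectI, rule exI[of _ 1], rule exI[of _ 0], simp)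
     (rule CollectI, rule exI[of _ 0], rule exI[of _ 1], simp)

lemma gen_ideal2_minus_right: "gen_ideal2 d a (- b) = gen_ideal2 d a b"
proof -
  have "gen_ideal2 d a (- b) \<subseteq> gen_ideal2 d a b" for b
  proof
    fix z assume "z \<in> gen_ideal2 d a (- b)"
    then obtain s t where "z = a * s + - b * t" "s \<in> OK d" "t \<in> OK d"
      by (auto simp: gen_ideal2_def)
    then have "z = a * s + b * (- t)" "s \<in> OK d" "- t \<in> OK d" by (simp_all add: OK_minus)
    then show "z \<in> gen_ideal2 d a b" unfolding gen_ideal2_def by blast
  qed
  from this[of b] this[of "- b"] show ?thesis by auto
qed

lemma ideal_mult_ideal: "is_ideal d I \<Longrightarrow> is_ideal d J \<Longrightarrow> is_ideal d (ideal_mult d I J)"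
  unfolding ideal_mult_def
  by (rule ideal_Inter[of "OK d"]) (auto simp: ideal_OK dest!: ideal_subset intro!: OK_mult)

lemma ideal_mult_mem: "x \<in> I \<Longrightarrow> y \<in> J \<Longrightarrow> x * y \<in> ideal_mult d I J"
  by (auto simp: ideal_mult_def)

lemma ideal_mult_least:
  "is_ideal d L \<Longrightarrow> (\<And>x y. x \<in> I \<Longrightarrow> y \<in> J \<Longrightarrow> x * y \<in> L) \<Longrightarrow> ideal_mult d I J \<subseteq> L"
  by (auto simp: ideal_mult_def)

lemma ideal_mult_subset_left: "is_ideal d I \<Longrightarrow> J \<subseteq> OK d \<Longrightarrow> ideal_mult d I J \<subseteq> I"
  by (rule ideal_mult_least) (auto intro: ideal_mult_right)

lemma ideal_mult_gen_ideal:
  assumes "a \<in> OK d" "b \<in> OK d"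
  shows "ideal_mult d (gen_ideal d a) (gen_ideal d b) = gen_ideal d (a * b)"
proof
  show "ideal_mult d (gen_ideal d a) (gen_ideal d b) \<subseteq> gen_ideal d (a * b)"
    using assms by (intro ideal_mult_least ideal_gen_ideal OK_mult gen_ideal_mult)
  have "is_ideal d (ideal_mult d (gen_ideal d a) (gen_ideal d b))"
    using assms by (intro ideal_mult_ideal ideal_gen_ideal)
  moreover have "a * b \<in> ideal_mult d (gen_ideal d a) (gen_ideal d b)"
    by (intro ideal_mult_mem gen_ideal_self)
  ultimately show "gen_ideal d (a * b) \<subseteq> ideal_mult d (gen_ideal d a) (gen_ideal d b)"
    unfolding gen_ideal_def using ideal_mult_right by blast
qed

text \<open>Twice, the elements with the required property form an ideal containing all products
  \<open>x * y\<close> with \<open>x, y \<in> P\<close>.\<close>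

lemma ideal_mult_self_cnj_mem:
  assumes I: "is_ideal d I"
    and prods: "\<And>x y x' y'. x \<in> P \<Longrightarrow> y \<in> P \<Longrightarrow> x' \<in> P \<Longrightarrow> y' \<in> P \<Longrightarrow> x * y * cnj (x' * y') \<in> I"
    and P: "P \<subseteq> OK d" and u: "u \<in> ideal_mult d P P" and v: "v \<in> ideal_mult d P P"
  shows "u * cnj v \<in> I"
proof -
  let ?C = "cnj ` {x * y | x y. x \<in> P \<and> y \<in> P}"
  have "ideal_mult d P P \<subseteq> {w \<in> OK d. \<forall>c\<in>?C. w * c \<in> I}"
    using P prods by (intro ideal_mult_least ideal_colon[OF I]) (auto intro: OK_mult)
  then have u_prods: "u * cnj (x * y) \<in> I" if "x \<in> P" "y \<in> P" for x y
    using u that by blast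
  have "ideal_mult d P P \<subseteq> cnj ` {w \<in> OK d. \<forall>c\<in>{u}. w * c \<in> I}"
  proof (intro ideal_mult_least ideal_cnj_image ideal_colon[OF I])
    fix x y assume "x \<in> P" "y \<in> P"
    then show "x * y \<in> cnj ` {w \<in> OK d. \<forall>c\<in>{u}. w * c \<in> I}"
      using u_prods[of x y] P by (auto simp: image_iff mult.commute intro!: exI[of _ "cnj (x * y)"] OK_closed)
  qed
  then show ?thesis using v by (auto simp: mult.commute)
qed

lemma coset_eq:
  assumes I: "is_ideal d I" and h: "x - x' \<in> I"
  shows "coset d I x = coset d I x'"
proof -
  have "x - y \<in> I \<longleftrightarrow> x' - y \<in> I" for y
  proof
    assume "x - y \<in> I"
    then have "(x - y) - (x - x') \<in> I" using ideal_diff[OF I _ h] by blast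
    then show "x' - y \<in> I" by simp
  next
    assume "x' - y \<in> I"
    then have "(x' - y) + (x - x') \<in> I" using ideal_add[OF I _ h] by blast
    then show "x - y \<in> I" by simp
  qed
  then show ?thesis by (auto simp: coset_def)
qed

lemma coset_eqD:
  assumes I: "is_ideal d I" and "x' \<in> OK d" "coset d I x = coset d I x'"
  shows "x - x' \<in> I"
proof -
  have "x' \<in> coset d I x'" using assms(2) ideal_0[OF I] by (simp add: coset_def)
  then have "x' \<in> coset d I x" using assms(3) by simp
  then show ?thesis by (simp add: coset_def)
qed

lemma inj_on_int_cosets:
  assumes I: "is_ideal d I" and dvd: "\<And>k. of_int k \<in> I \<Longrightarrow> e dvd k"
  shows "inj_on (\<lambda>r. coset d I (of_int r)) {0..<e}"
proof
  fix r r' assume r: "r \<in> {0..<e}" and r': "r' \<in> {0..<e}"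
    and "coset d I (of_int r) = coset d I (of_int r')"
  then have "of_int (r - r') \<in> I" using coset_eqD[OF I] by simp
  then have "e dvd r - r'" by (rule dvd)
  then show "r = r'" using r r' by (metis atLeastLessThan_iff mod_pos_pos_trivial mod_eq_dvd_iff)
qed

lemma finite_cosets:
  assumes I: "is_ideal d I" and m: "m > 0" "of_int m \<in> I"
  shows "finite (coset d I ` OK d)"
proof -
  have "coset d I ` OK d \<subseteq> (\<lambda>(x, y). coset d I (of_coords d x y)) ` ({0..<m} \<times> {0..<m})"
  proof
    fix C assume "C \<in> coset d I ` OK d"
    then obtain x y where C: "C = coset d I (of_coords d x y)" by (auto simp: OK_iff)
    have "of_coords d x y - of_coords d (x mod m) (y mod m) = of_int m * of_coords d (x div m) (y div m)"
      by (simp add: of_coords_diff of_coords_smult minus_mod_eq_mult_div)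
    moreover have "of_int m * of_coords d (x div m) (y div m) \<in> I"
      by (rule ideal_mult_right[OF I of_coords_in_OK m(2)])
    ultimately have "C = coset d I (of_coords d (x mod m) (y mod m))"
      using C coset_eq[OF I] by simp
    then show "C \<in> (\<lambda>(x, y). coset d I (of_coords d x y)) ` ({0..<m} \<times> {0..<m})"
      using m(1) by force
  qed
  then show ?thesis by (rule finite_subset) simp
qed

lemma ideal_int_part:
  assumes I: "is_ideal d I" and k0: "of_int k0 \<in> I" "k0 \<noteq> 0"
  obtains e where "e > 0" "\<And>k. of_int k \<in> I \<longleftrightarrow> e dvd k"
proof -
  have "of_int \<bar>k0\<bar> \<in> I"
    using k0(1) ideal_minus[OF I k0(1)] by (cases "k0 \<ge> 0") simp_all
  then have "nat \<bar>k0\<bar> > 0 \<and> of_nat (nat \<bar>k0\<bar>) \<in> I" using k0(2) by simp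
  then have ex: "\<exists>k::nat. k > 0 \<and> of_nat k \<in> I" by blast
  define e0 where "e0 = (LEAST k::nat. k > 0 \<and> of_nat k \<in> I)"
  have e0: "e0 > 0 \<and> of_nat e0 \<in> I" unfolding e0_def using ex by (rule LeastI_ex)
  define e where "e = int e0"
  have epos: "e > 0" and eI: "of_int e \<in> I" using e0 by (simp_all add: e_def)
  have "e dvd k" if k: "of_int k \<in> I" for k
  proof -
    define r where "r = k mod e"
    have "r = k - k div e * e" by (simp add: r_def minus_div_mult_eq_mod)
    then have "of_int r = of_int k - of_int (k div e) * (of_int e :: complex)" by simp
    then have rI: "of_int r \<in> I" using ideal_diff[OF I k ideal_of_int_mult[OF I eI]] by simp
    have r0: "r \<ge> 0" "r < e" using epos by (simp_all add: r_def)
    have "r = 0"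
    proof (rule ccontr)
      assume "r \<noteq> 0"
      then have "nat r > 0 \<and> of_nat (nat r) \<in> I" using r0 rI by simp
      then have "e0 \<le> nat r" unfolding e0_def by (rule Least_le)
      then show False using r0 by (simp add: e_def)
    qed
    then show ?thesis by (simp add: r_def dvd_eq_mod_eq_0)
  qed
  moreover have "of_int k \<in> I" if ek: "e dvd k" for k
  proof -
    obtain j where "k = e * j" using ek by (rule dvdE)
    then show ?thesis using ideal_of_int_mult[OF I eI, of j] by (simp add: mult.commute)
  qed
  ultimately show ?thesis using that epos by blast
qed

lemma int_le_ideal_norm:
  assumes I: "is_ideal d I" and e: "e > 0" "\<And>k. of_int k \<in> I \<longleftrightarrow> e dvd k"
  shows "nat e \<le> ideal_norm d I"
proof -
  have "card ((\<lambda>r. coset d I (of_int r)) ` {0..<e}) \<le> card (coset d I ` OK d)"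
    using finite_cosets[OF I e(1)] e(2) by (intro card_mono) auto
  then show ?thesis using inj_on_int_cosets[OF I] e(2) by (simp add: ideal_norm_eq_card_cosets card_image)
qed

lemma coprime_idealsE:
  assumes "coprime_ideals d P (cnj ` P)" "z \<in> OK d"
  obtains x y where "x \<in> P" "y \<in> P" "z = x + cnj y"
proof -
  have "z \<in> {x + y | x y. x \<in> P \<and> y \<in> cnj ` P}" using assms by (simp add: coprime_ideals_def)
  then show ?thesis using that by blast
qed

end

section \<open>Lattice ideals\<close>

definition lattice :: "nat \<Rightarrow> int \<Rightarrow> int \<Rightarrow> complex set" where
  "lattice d e c = {of_coords d (i * e + j * c) j | i j. True}"

context squarefree_field
begin

lemma lattice_mem: "of_coords d x y \<in> lattice d e c \<longleftrightarrow> e dvd x - y * c"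
proof
  assume "of_coords d x y \<in> lattice d e c"
  then obtain i j where "of_coords d x y = of_coords d (i * e + j * c) j" by (auto simp: lattice_def)
  then show "e dvd x - y * c" by simp
next
  assume "e dvd x - y * c"
  then obtain i where "x - y * c = e * i" by (auto elim: dvdE)
  then have "of_coords d x y = of_coords d (i * e + y * c) y" by (simp add: algebra_simps)
  then show "of_coords d x y \<in> lattice d e c" by (auto simp: lattice_def)
qed

lemma lattice_subset_OK: "lattice d e c \<subseteq> OK d"
  by (auto simp: lattice_def of_coords_in_OK)

lemma lattice_memE:
  assumes z: "z \<in> lattice d e c"
  obtains x y where "z = of_coords d x y" "e dvd x - y * c"
proof -
  have "z \<in> OK d" using z lattice_subset_OK by blast
  then obtain x y where "z = of_coords d x y" by (auto simp: OK_iff)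
  then show ?thesis using that z lattice_mem by blast
qed

lemma of_int_in_lattice_iff: "of_int k \<in> lattice d e c \<longleftrightarrow> e dvd k"
  using lattice_mem[of k 0 e c] by (simp flip: of_int_eq_of_coords)

lemma lattice_alt: "z \<in> lattice d e c \<longleftrightarrow> (\<exists>i j. z = of_int i * of_int e + of_int j * of_coords d c 1)"
  by (auto simp: lattice_def of_coords_def algebra_simps)

text \<open>Closure under multiplication by \<open>\<omega>\<close> amounts to \<open>e\<close> dividing the norm of \<open>c + \<omega>\<close>.\<close>

lemma ideal_lattice:
  assumes "e dvd norm_form d c 1"
  shows "is_ideal d (lattice d e c)"
  unfolding is_ideal_def
proof (intro conjI ballI)
  show "lattice d e c \<subseteq> OK d" by (rule lattice_subset_OK)
  show "0 \<in> lattice d e c" using of_int_in_lattice_iff[of 0] by simp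
  fix x y assume "x \<in> lattice d e c" "y \<in> lattice d e c"
  then obtain x1 x2 y1 y2 where "x = of_coords d x1 x2" "e dvd x1 - x2 * c"
    "y = of_coords d y1 y2" "e dvd y1 - y2 * c"
    by (meson lattice_memE)
  then have "e dvd (x1 - x2 * c) + (y1 - y2 * c)" "x + y = of_coords d (x1 + y1) (x2 + y2)"
    by (simp_all add: of_coords_add)
  moreover have "(x1 + y1) - (x2 + y2) * c = (x1 - x2 * c) + (y1 - y2 * c)" by (simp add: algebra_simps)
  ultimately show "x + y \<in> lattice d e c" by (simp only: lattice_mem)
next
  fix r x assume "r \<in> OK d" "x \<in> lattice d e c"
  obtain x1 x2 where x: "x = of_coords d x1 x2" "e dvd x1 - x2 * c"
    using \<open>x \<in> lattice d e c\<close> by (rule lattice_memE)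
  obtain r1 r2 where r: "r = of_coords d r1 r2" using \<open>r \<in> OK d\<close> OK_iff by blast
  obtain k where "x1 - x2 * c = e * k" using x(2) by (auto elim: dvdE)
  then have k: "x1 = x2 * c + e * k" by simp
  obtain l where "norm_form d c 1 = e * l" using assms by (auto elim: dvdE)
  then have l: "c^2 + omega_trace d * c + omega_norm d = e * l" by (simp add: norm_form_def)
  have "(r1 * x1 - omega_norm d * r2 * x2) - (r1 * x2 + r2 * x1 + omega_trace d * r2 * x2) * c
      = r1 * (x1 - x2 * c) - r2 * (x2 * (c^2 + omega_trace d * c + omega_norm d) + (x1 - x2 * c) * c)"
    by (simp add: algebra_simps power2_eq_square)
  also have "c^2 + omega_trace d * c + omega_norm d = e * l" by (rule l)
  also have "r1 * (x1 - x2 * c) - r2 * (x2 * (e * l) + (x1 - x2 * c) * c) = e * (r1 * k - r2 * (x2 * l + k * c))"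
    by (simp add: k algebra_simps)
  finally show "r * x \<in> lattice d e c" by (simp add: r x of_coords_mult lattice_mem)
qed

lemma ideal_norm_lattice:
  assumes e: "e > 0" and I: "is_ideal d (lattice d e c)"
  shows "ideal_norm d (lattice d e c) = nat e"
proof -
  let ?L = "lattice d e c"
  let ?f = "\<lambda>r::int. coset d ?L (of_int r)"
  have "coset d ?L ` OK d \<subseteq> ?f ` {0..<e}"
  proof
    fix C assume "C \<in> coset d ?L ` OK d"
    then obtain x y where C: "C = coset d ?L (of_coords d x y)" by (auto simp: OK_iff)
    define r where "r = (x - y * c) mod e"
    have "of_coords d x y - of_int r = of_coords d (x - r) y"
      by (simp add: of_coords_def algebra_simps)
    moreover have "(x - r) - y * c = e * ((x - y * c) div e)"
      by (simp add: r_def algebra_simps minus_mod_eq_mult_div)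
    ultimately have "of_coords d x y - of_int r \<in> ?L" by (simp add: lattice_mem)
    then have "C = ?f r" using C coset_eq[OF I] by simp
    moreover have "r \<in> {0..<e}" using e by (simp add: r_def)
    ultimately show "C \<in> ?f ` {0..<e}" by blast
  qed
  then have "coset d ?L ` OK d = ?f ` {0..<e}" by auto
  then show ?thesis
    using inj_on_int_cosets[OF I] by (simp add: ideal_norm_eq_card_cosets card_image of_int_in_lattice_iff)
qed

lemma lattice_mult_cnj:
  assumes "x \<in> lattice d e c" "y \<in> lattice d e c" "e dvd norm_form d c 1"
  obtains s where "s \<in> OK d" "x * cnj y = of_int e * s"
proof -
  let ?b = "of_coords d c 1"
  obtain i j i' j' where x: "x = of_int i * of_int e + of_int j * ?b"
    and y: "y = of_int i' * of_int e + of_int j' * ?b"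
    using assms(1,2) by (auto simp: lattice_alt)
  obtain k where "norm_form d c 1 = e * k" using assms(3) by (rule dvdE)
  then have Nb: "?b * cnj ?b = of_int e * of_int k" by (simp add: of_coords_mult_cnj)
  define s where "s = of_int i * of_int i' * of_int e + of_int i * of_int j' * cnj ?b
     + of_int j * of_int i' * ?b + of_int j * of_int j' * of_int k"
  have "x * cnj y = of_int i * of_int i' * of_int e * of_int e + of_int i * of_int j' * of_int e * cnj ?b
     + of_int j * of_int i' * of_int e * ?b + of_int j * of_int j' * (?b * cnj ?b)"
    by (simp add: x y algebra_simps)
  also have "\<dots> = of_int e * s" by (simp add: Nb s_def algebra_simps)
  finally have "x * cnj y = of_int e * s" .
  moreover have "s \<in> OK d" unfolding s_def by (intro OK_closed)
  ultimately show ?thesis by (rule that[rotated])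
qed

lemma coprime_ideals_lattice:
  assumes cp: "coprime e (2 * c + omega_trace d)"
  shows "coprime_ideals d (lattice d e c) (cnj ` lattice d e c)"
  unfolding coprime_ideals_def
proof (intro equalityI subsetI)
  fix z assume "z \<in> {x + y |x y. x \<in> lattice d e c \<and> y \<in> cnj ` lattice d e c}"
  then show "z \<in> OK d" using lattice_subset_OK OK_add OK_cnj by blast
next
  fix z assume "z \<in> OK d"
  then obtain z1 z2 where z: "z = of_coords d z1 z2" using OK_iff by blast
  obtain l m where lm: "l * e + m * (2 * c + omega_trace d) = 1"
    using bezout_int[of e "2 * c + omega_trace d"] cp by auto
  let ?b = "of_coords d c 1"
  have "of_int l * of_int e + of_int m * (?b + cnj ?b) = (1::complex)"
    using arg_cong[OF lm, of "of_int :: int \<Rightarrow> complex"] by (simp add: of_coords_add_cnj)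
  then have one: "z = of_int (z1 - z2 * c) * (of_int l * of_int e + of_int m * (?b + cnj ?b)) + of_int z2 * ?b"
    by (simp add: z of_coords_def algebra_simps)
  define x where "x = of_int ((z1 - z2 * c) * l) * of_int e + of_int (z1 * m + z2 - z2 * c * m) * ?b"
  define y where "y = of_int (0::int) * of_int e + of_int ((z1 - z2 * c) * m) * ?b"
  have "x \<in> lattice d e c" "y \<in> lattice d e c" unfolding x_def y_def lattice_alt by blast+
  moreover have "z = x + cnj y" unfolding one x_def y_def by (simp add: algebra_simps)
  ultimately show "z \<in> {x + y |x y. x \<in> lattice d e c \<and> y \<in> cnj ` lattice d e c}" by blast
qed

text \<open>Writing \<open>\<omega> = u + cnj v\<close> with \<open>u, v \<in> P\<close>, the element \<open>u - v\<close> has \<open>\<omega>\<close>-coordinate 1.\<close>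

lemma coprime_ideals_omega_shift:
  assumes I: "is_ideal d P" and cop: "coprime_ideals d P (cnj ` P)"
  obtains c where "of_coords d c 1 \<in> P"
proof -
  obtain u v where uv: "u \<in> P" "v \<in> P" "omega d = u + cnj v"
    using coprime_idealsE[OF cop omega_in_OK] .
  obtain a1 a2 b1 b2 where a: "u = of_coords d a1 a2" and b: "v = of_coords d b1 b2"
    using uv(1,2) ideal_subset[OF I] OK_iff by blast
  have "of_coords d 0 1 = of_coords d (a1 + (b1 + omega_trace d * b2)) (a2 + - b2)"
    using uv(3) by (simp add: a b cnj_of_coords of_coords_add omega_eq_of_coords)
  then have "a2 - b2 = 1" by simp
  then have "u - v = of_coords d (a1 - b1) 1" by (simp add: a b of_coords_diff)
  then show ?thesis using ideal_diff[OF I uv(1,2)] that by simp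
qed

lemma ideal_eq_lattice:
  assumes I: "is_ideal d P" and nz: "P \<noteq> {0}" and cop: "coprime_ideals d P (cnj ` P)"
  obtains e c where "e > 0" "P = lattice d e c" "e dvd norm_form d c 1"
proof -
  obtain z where z: "z \<in> P" "z \<noteq> 0" using nz ideal_0[OF I] by blast
  then obtain x y where xy: "z = of_coords d x y" using ideal_subset[OF I] OK_iff by blast
  have "cnj z * z \<in> P" using ideal_mult_left[OF I _ z(1)] OK_cnj ideal_subset[OF I] z(1) by blast
  then have kP: "of_int (norm_form d x y) \<in> P" by (simp add: xy mult.commute of_coords_mult_cnj)
  have "(x, y) \<noteq> (0, 0)" using z(2) xy by auto
  then have k0: "norm_form d x y \<noteq> 0" using norm_form_pos[of x y] by simp
  obtain e where e: "e > 0" and int_part: "\<And>k. of_int k \<in> P \<longleftrightarrow> e dvd k"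
    using ideal_int_part[OF I kP k0] by metis
  obtain c where beta: "of_coords d c 1 \<in> P" using coprime_ideals_omega_shift[OF I cop] .
  have "P = lattice d e c"
  proof
    show "P \<subseteq> lattice d e c"
    proof
      fix z assume zP: "z \<in> P"
      then obtain x y where z: "z = of_coords d x y" using ideal_subset[OF I] OK_iff by blast
      have eq: "of_int (x - y * c) = z - of_int y * of_coords d c 1"
        by (simp add: z of_coords_def algebra_simps)
      have "of_int (x - y * c) \<in> P"
        unfolding eq by (rule ideal_diff[OF I zP ideal_of_int_mult[OF I beta]])
      then have "e dvd x - y * c" by (simp only: int_part)
      then show "z \<in> lattice d e c" by (simp add: z lattice_mem)
    qed
    show "lattice d e c \<subseteq> P"
      using ideal_add[OF I ideal_of_int_mult[OF I] ideal_of_int_mult[OF I beta]] int_part[of e]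
      by (auto simp: lattice_alt)
  qed
  moreover have "cnj (of_coords d c 1) * of_coords d c 1 \<in> P"
    by (rule ideal_mult_left[OF I OK_cnj[OF of_coords_in_OK] beta])
  then have "e dvd norm_form d c 1" using int_part by (simp add: mult.commute of_coords_mult_cnj)
  ultimately show ?thesis using that e by blast
qed

section \<open>Ideals with principal square\<close>

lemma norm_gen_in_gen_ideal_sq:
  assumes "e dvd norm_form d c 1"
    and P2: "ideal_mult d (lattice d e c) (lattice d e c) = gen_ideal d g"
  shows "g * cnj g \<in> gen_ideal d (of_int (e^2))"
proof (rule ideal_mult_self_cnj_mem)
  show "is_ideal d (gen_ideal d (of_int (e^2)))" by (rule ideal_gen_ideal[OF OK_of_int])
  show "g \<in> ideal_mult d (lattice d e c) (lattice d e c)" by (simp add: P2 gen_ideal_self)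
  then show "g \<in> ideal_mult d (lattice d e c) (lattice d e c)" .
  show "lattice d e c \<subseteq> OK d" by (rule lattice_subset_OK)
  fix x y x' y' assume "x \<in> lattice d e c" "y \<in> lattice d e c" "x' \<in> lattice d e c" "y' \<in> lattice d e c"
  then obtain s s' where "s \<in> OK d" "x * cnj x' = of_int e * s" "s' \<in> OK d" "y * cnj y' = of_int e * s'"
    using lattice_mult_cnj[OF _ _ assms(1)] by metis
  then have "x * y * cnj (x' * y') = of_int (e^2) * (s * s')" "s * s' \<in> OK d"
    by (simp_all add: OK_mult power2_eq_square algebra_simps)
  then show "x * y * cnj (x' * y') \<in> gen_ideal d (of_int (e^2))" by (simp add: gen_ideal_mem)
qed

text \<open>Writing \<open>1 = u + cnj v\<close> with \<open>u, v \<in> P\<close>, each term of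
  \<open>e\<^sup>2 = u\<^sup>2 e\<^sup>2 + 2 (eu)(e cnj v) + e\<^sup>2 (cnj v)\<^sup>2\<close> is a product of an element of \<open>P\<^sup>2 = (g)\<close>
  and one of its conjugate \<open>(cnj g)\<close>.\<close>

lemma of_int_sq_in_gen_ideal_norm:
  assumes cop: "coprime_ideals d P (cnj ` P)" and eP: "of_int e \<in> P"
    and P2: "ideal_mult d P P = gen_ideal d g" and g: "g \<in> OK d"
  shows "of_int (e^2) \<in> gen_ideal d (g * cnj g)"
proof -
  obtain u v where uv: "u \<in> P" "v \<in> P" "1 = u + cnj v" using coprime_idealsE[OF cop OK_1] .
  have sq: "x * y \<in> gen_ideal d g" if "x \<in> P" "y \<in> P" for x y
    using ideal_mult_mem[OF that] P2 by simp
  let ?E = "of_int e :: complex" and ?G = "gen_ideal d (g * cnj g)"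
  have "cnj (?E * ?E) = ?E * ?E" by simp
  then have "(u * u) * (?E * ?E) \<in> ?G"
    using gen_ideal_mult[OF sq[OF uv(1) uv(1)] cnj_gen_ideal[OF sq[OF eP eP]]] by simp
  moreover have "(?E * u) * cnj (?E * v) \<in> ?G"
    using gen_ideal_mult[OF sq[OF eP uv(1)] cnj_gen_ideal[OF sq[OF eP uv(2)]]] .
  moreover have "(?E * ?E) * cnj (v * v) \<in> ?G"
    using gen_ideal_mult[OF sq[OF eP eP] cnj_gen_ideal[OF sq[OF uv(2) uv(2)]]] .
  moreover have "is_ideal d ?G" using g by (simp add: ideal_gen_ideal OK_mult OK_cnj)
  ultimately have "(u * u) * (?E * ?E) + of_int 2 * ((?E * u) * cnj (?E * v)) + (?E * ?E) * cnj (v * v) \<in> ?G"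
    by (intro ideal_add ideal_of_int_mult)
  also have "(u * u) * (?E * ?E) + of_int 2 * ((?E * u) * cnj (?E * v)) + (?E * ?E) * cnj (v * v)
      = ?E * ?E * (u + cnj v)^2"
    by (simp add: power2_eq_square algebra_simps)
  finally show ?thesis by (simp add: power2_eq_square flip: uv(3))
qed

lemma lattice_eq_gen_ideal2:
  assumes cop: "coprime_ideals d P (cnj ` P)" and P: "P = lattice d e c" "e dvd norm_form d c 1"
    and P2: "ideal_mult d P P = gen_ideal d g"
  shows "P = gen_ideal2 d (of_int e) g"
proof
  have I: "is_ideal d P" using P ideal_lattice by simp
  show "P \<subseteq> gen_ideal2 d (of_int e) g"
  proof
    fix x assume xP: "x \<in> P"
    obtain u v where uv: "u \<in> P" "v \<in> P" "1 = u + cnj v" using coprime_idealsE[OF cop OK_1] .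
    obtain t where t: "t \<in> OK d" "x * u = g * t"
      using ideal_mult_mem[OF xP uv(1)] P2 by (auto simp: gen_ideal_def)
    obtain s where s: "s \<in> OK d" "x * cnj v = of_int e * s"
      using lattice_mult_cnj[of x e c v] xP uv(2) P by blast
    have "x = x * u + x * cnj v" using uv(3) by (metis distrib_left mult.right_neutral)
    then have "x = of_int e * s + g * t" using s t by simp
    then show "x \<in> gen_ideal2 d (of_int e) g" using s t by (auto simp: gen_ideal2_def)
  qed
  have "of_int e \<in> P" using P of_int_in_lattice_iff by simp
  moreover have "g \<in> P" using ideal_mult_subset_left[OF I ideal_subset[OF I]] P2 gen_ideal_self by blast
  ultimately show "gen_ideal2 d (of_int e) g \<subseteq> P"
    using ideal_add[OF I ideal_mult_right[OF I] ideal_mult_right[OF I]] by (auto simp: gen_ideal2_def)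
qed

text \<open>A common divisor \<open>q\<close> of \<open>e\<close> and of the trace \<open>T\<close> of \<open>g\<close> would give
  \<open>cnj g = T - g \<in> q\<O>\<close> and then \<open>1 \<in> q\<O>\<close>.\<close>

lemma coprime_norm_trace:
  assumes cop: "coprime_ideals d (gen_ideal2 d (of_int e) g) (cnj ` gen_ideal2 d (of_int e) g)"
    and g: "g \<in> OK d" and gg: "g * cnj g = of_int (e^2)" and T: "g + cnj g = of_int T"
  shows "coprime e T"
proof (rule coprimeI)
  fix q assume "q dvd e" "q dvd T"
  then obtain e' T' where e': "e = q * e'" and T': "T = q * T'" by (auto elim!: dvdE)
  obtain u v where "u \<in> gen_ideal2 d (of_int e) g" "v \<in> gen_ideal2 d (of_int e) g" and uv: "1 = u + cnj v"
    using coprime_idealsE[OF cop OK_1] .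
  then obtain s1 t1 s2 t2 where st: "s1 \<in> OK d" "t1 \<in> OK d" "u = of_int e * s1 + g * t1"
    "s2 \<in> OK d" "t2 \<in> OK d" "v = of_int e * s2 + g * t2"
    by (auto simp: gen_ideal2_def)
  have cg: "cnj g = of_int T - g" using T by (simp add: algebra_simps)
  define Z where "Z = of_int e' * (s1 + cnj s2) + of_int T' * cnj t2"
  define Y where "Y = t1 - cnj t2"
  have one: "1 = of_int q * Z + g * Y"
    unfolding uv st(3,6) Z_def Y_def by (simp add: cg e' T' algebra_simps)
  define Z2 where "Z2 = Z * cnj g + of_int e' * of_int e * Y"
  have "cnj g = cnj g * (of_int q * Z + g * Y)" using one by simp
  also have "\<dots> = of_int q * Z2" by (simp add: gg Z2_def e' power2_eq_square algebra_simps)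
  finally have g2: "g = of_int q * (of_int T' - Z2)" using cg T' by (simp add: algebra_simps)
  have "1 = of_int q * (Z + (of_int T' - Z2) * Y)"
    by (subst one, subst g2) (simp add: algebra_simps)
  moreover have "Z + (of_int T' - Z2) * Y \<in> OK d"
    unfolding Z2_def Z_def Y_def using st g by (intro OK_closed)
  ultimately have "q dvd 1" using of_int_dvd_in_OK[of 1 q] by simp
  then show "is_unit q" .
qed

text \<open>Elements of \<open>(e, g)\<close> clear the denominator since \<open>g cnj g = e\<^sup>2\<close>; conversely write
  \<open>x = xu + x cnj v\<close> with \<open>1 = u + cnj v\<close>.\<close>

lemma denom_ideal_cnj_div:
  assumes cop: "coprime_ideals d P (cnj ` P)" and P: "P = gen_ideal2 d (of_int e) g"
    and g: "g \<in> OK d" and gg: "g * cnj g = of_int (e^2)" and e: "e \<noteq> 0"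
  shows "denom_ideal d (cnj g / of_int e) = P"
proof
  have I: "is_ideal d P" using P g by (simp add: ideal_gen_ideal2)
  show "P \<subseteq> denom_ideal d (cnj g / of_int e)"
  proof
    fix x assume "x \<in> P"
    then obtain s t where st: "s \<in> OK d" "t \<in> OK d" "x = of_int e * s + g * t"
      by (auto simp: P gen_ideal2_def)
    have "x * (cnj g / of_int e) = s * cnj g + (g * cnj g) * t / of_int e"
      using e by (simp add: st(3) field_simps)
    also have "\<dots> = s * cnj g + of_int e * t" using e by (simp add: gg power2_eq_square)
    finally have "x * (cnj g / of_int e) \<in> OK d" using st g by (simp add: OK_closed)
    then show "x \<in> denom_ideal d (cnj g / of_int e)"
      using \<open>x \<in> P\<close> ideal_subset[OF I] by (auto simp: denom_ideal_def)
  qed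
  show "denom_ideal d (cnj g / of_int e) \<subseteq> P"
  proof
    fix x assume "x \<in> denom_ideal d (cnj g / of_int e)"
    then have x: "x \<in> OK d" and xz: "x * (cnj g / of_int e) \<in> OK d" by (auto simp: denom_ideal_def)
    obtain u v where uv: "u \<in> P" "v \<in> P" "1 = u + cnj v" using coprime_idealsE[OF cop OK_1] .
    obtain s t where st: "s \<in> OK d" "t \<in> OK d" "v = of_int e * s + g * t"
      using uv(2) by (auto simp: P gen_ideal2_def)
    have "x * cnj v = (x * cnj s + x * (cnj g / of_int e) * cnj t) * of_int e"
      using e by (simp add: st(3) field_simps)
    moreover have "x * cnj s + x * (cnj g / of_int e) * cnj t \<in> OK d"
      using OK_add[OF OK_mult[OF x OK_cnj[OF st(1)]] OK_mult[OF xz OK_cnj[OF st(2)]]] .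
    moreover have "of_int e \<in> P" by (simp add: P gen_ideal2_left)
    ultimately have "x * cnj v \<in> P" using ideal_mult_left[OF I] by simp
    moreover have "x * u \<in> P" using ideal_mult_left[OF I x uv(1)] by (simp add: mult.commute)
    ultimately have "x * u + x * cnj v \<in> P" by (rule ideal_add[OF I, rotated])
    then show "x \<in> P" using uv(3) by (metis distrib_left mult.right_neutral)
  qed
qed

lemma primitive_solution_generator:
  assumes sol: "is_solution d (n, a, b)" and cna: "coprime n a"
  obtains gx gy where "a = 2 * gx + omega_trace d * gy" "b = omega_scale d * gy"
    "norm_form d gx gy = n^2" "coprime gy n"
proof -
  have n0: "n > 0" and eq: "4 * n^2 = a^2 + int d * b^2" using sol by (auto simp: is_solution_def)
  have "4 dvd a^2 + int d * b^2" unfolding eq[symmetric] by simp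
  then obtain gx gy where gxy: "(of_int a + of_int b * sqm d) / 2 = of_coords d gx gy"
    using half_in_coords[OF squarefree] by blast
  have "of_int a + of_int b * sqm d = 2 * of_coords d gx gy" using gxy by simp
  also have "\<dots> = of_int (2 * gx + omega_trace d * gy) + of_int (omega_scale d * gy) * sqm d"
    by (rule two_of_coords)
  finally have "of_int a + of_int b * sqm d
      = of_int (2 * gx + omega_trace d * gy) + of_int (omega_scale d * gy) * sqm d" .
  then have ab: "a = 2 * gx + omega_trace d * gy" "b = omega_scale d * gy"
    using sqm_coords_inj[OF d_pos] by blast+
  have "4 * norm_form d gx gy = 4 * n^2"
    unfolding four_norm_form eq ab by simp
  then have N: "norm_form d gx gy = n^2" by simp
  have "coprime gy n"
  proof (rule ccontr)
    assume "\<not> coprime gy n"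
    then obtain q where q: "q dvd gy" "q dvd n" "\<not> is_unit q" by (rule not_coprimeE)
    have "q \<noteq> 0" using q(2) n0 by auto
    then obtain p where p: "p dvd q" "prime p" using prime_divisor_exists q(3) by blast
    have pgy: "p dvd gy" and pn: "p dvd n" using p q dvd_trans by blast+
    have "gx^2 = n^2 - omega_trace d * gx * gy - omega_norm d * gy^2" using N by (simp add: norm_form_def)
    moreover have "p dvd n^2 - omega_trace d * gx * gy - omega_norm d * gy^2"
      using pgy pn by (simp add: power2_eq_square)
    ultimately have "p dvd gx^2" by simp
    then have "p dvd gx" using p(2) prime_dvd_power by blast
    then have "p dvd a" using pgy by (simp add: ab)
    then have "is_unit p" using pn cna coprime_common_divisor by blast
    then show False using p(2) not_prime_unit by blast
  qed
  then show ?thesis using that ab N by blast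
qed

text \<open>\<open>c + \<omega> = u g + n v \<omega>\<close> for \<open>c = u \<cdot> gx\<close> and \<open>g = gx + gy \<omega>\<close>, since \<open>u gy + v n = 1\<close>.\<close>

lemma gen_ideal2_eq_lattice_bezout:
  assumes uv: "u * gy + v * n = 1" and nN: "n dvd norm_form d (u * gx) 1"
  shows "gen_ideal2 d (of_int n) (of_coords d gx gy) = lattice d n (u * gx)"
proof -
  define c where "c = u * gx"
  let ?g = "of_coords d gx gy"
  have "gx - gy * c - n * (gx * v) = gx * (1 - (u * gy + v * n))" by (simp add: c_def algebra_simps)
  then have "gx - gy * c = n * (gx * v)" using uv by simp
  then have "?g \<in> lattice d n c" by (simp add: lattice_mem)
  then have "gen_ideal2 d (of_int n) ?g \<subseteq> lattice d n c"
    using ideal_lattice[OF nN[folded c_def]] of_int_in_lattice_iff[of n n c]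
    by (auto simp: gen_ideal2_def intro!: ideal_add ideal_mult_right)
  moreover have "lattice d n c \<subseteq> gen_ideal2 d (of_int n) ?g"
  proof
    have "of_int u * ?g + of_int n * (of_int v * omega d) = of_int c + of_int (u * gy + v * n) * omega d"
      by (simp add: of_coords_def c_def algebra_simps)
    then have beta: "of_coords d c 1 = of_int u * ?g + of_int n * (of_int v * omega d)"
      using uv by (simp add: of_coords_def)
    fix x assume "x \<in> lattice d n c"
    then obtain i j where "x = of_int i * of_int n + of_int j * of_coords d c 1"
      by (auto simp: lattice_alt)
    then have "x = of_int n * (of_int i + of_int j * (of_int v * omega d)) + ?g * (of_int j * of_int u)"
      by (simp add: beta algebra_simps)
    moreover have "of_int i + of_int j * (of_int v * omega d) \<in> OK d" "of_int j * of_int u \<in> OK d"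
      by (intro OK_closed)+
    ultimately show "x \<in> gen_ideal2 d (of_int n) ?g" by (auto simp: gen_ideal2_def)
  qed
  ultimately show ?thesis unfolding c_def by blast
qed

lemma gen_ideal2_eq_lattice:
  assumes N: "norm_form d gx gy = n^2" and cgn: "coprime gy n"
    and cna: "coprime n (2 * gx + omega_trace d * gy)"
  obtains c where "gen_ideal2 d (of_int n) (of_coords d gx gy) = lattice d n c"
    "n dvd norm_form d c 1" "coprime n (2 * c + omega_trace d)"
proof -
  obtain u v where uv: "u * gy + v * n = 1" using bezout_int[of gy n] cgn by auto
  define c where "c = u * gx"
  have vn: "v * n = 1 - u * gy" using uv by simp
  have "n * (u^2 * n + omega_trace d * u * gx * v + omega_norm d * v * (1 + u * gy))
      = u^2 * n^2 + omega_trace d * u * gx * (v * n) + omega_norm d * (v * n) * (1 + u * gy)"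
    by (simp add: algebra_simps power2_eq_square)
  also have "\<dots> = u^2 * norm_form d gx gy + omega_trace d * u * gx * (1 - u * gy)
      + omega_norm d * (1 - u * gy) * (1 + u * gy)"
    by (simp only: vn N)
  also have "\<dots> = norm_form d c 1" by (simp add: norm_form_def c_def algebra_simps power2_eq_square)
  finally have nN: "n dvd norm_form d c 1" by (rule dvdI[OF sym])
  have "coprime n (2 * c + omega_trace d)"
  proof (rule coprimeI)
    fix q assume q: "q dvd n" "q dvd 2 * c + omega_trace d"
    have "gy * (2 * c + omega_trace d) - (2 * gx + omega_trace d * gy - 2 * gx * (v * n))
        = 2 * gx * (u * gy + v * n - 1)"
      by (simp add: c_def algebra_simps)
    then have "gy * (2 * c + omega_trace d) = 2 * gx + omega_trace d * gy - 2 * gx * (v * n)"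
      using uv by simp
    moreover have "q dvd gy * (2 * c + omega_trace d)" using q(2) by simp
    ultimately have "q dvd 2 * gx + omega_trace d * gy - 2 * gx * (v * n)" by simp
    moreover have "q dvd 2 * gx * (v * n)" using q(1) by simp
    ultimately have "q dvd (2 * gx + omega_trace d * gy - 2 * gx * (v * n)) + 2 * gx * (v * n)"
      by (rule dvd_add)
    then have "q dvd 2 * gx + omega_trace d * gy" by simp
    then show "is_unit q" using q(1) cna coprime_common_divisor by blast
  qed
  moreover have "gen_ideal2 d (of_int n) (of_coords d gx gy) = lattice d n c"
    unfolding c_def by (rule gen_ideal2_eq_lattice_bezout[OF uv nN[unfolded c_def]])
  ultimately show ?thesis using that nN by blast
qed

text \<open>The products \<open>n\<^sup>2 = g cnj g\<close>, \<open>ng\<close>, \<open>g\<^sup>2\<close> are multiples of \<open>g\<close>, and conversely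
  \<open>g = \<sigma> (g\<^sup>2 + n\<^sup>2) + \<tau> ng\<close> from \<open>ag = g\<^sup>2 + n\<^sup>2\<close> and \<open>\<sigma> a + \<tau> n = 1\<close>.\<close>

lemma ideal_mult_gen_ideal2_self:
  assumes g: "g \<in> OK d" and gg: "g * cnj g = of_int n * of_int n" and tr: "g + cnj g = of_int a"
    and cna: "coprime a n"
  shows "ideal_mult d (gen_ideal2 d (of_int n) g) (gen_ideal2 d (of_int n) g) = gen_ideal d g"
proof
  let ?P = "gen_ideal2 d (of_int n) g"
  have I: "is_ideal d ?P" using g by (simp add: ideal_gen_ideal2)
  show "ideal_mult d ?P ?P \<subseteq> gen_ideal d g"
  proof (rule ideal_mult_least[OF ideal_gen_ideal[OF g]])
    fix x y assume "x \<in> ?P" "y \<in> ?P"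
    then obtain s t s' t' where st: "s \<in> OK d" "t \<in> OK d" "x = of_int n * s + g * t"
      "s' \<in> OK d" "t' \<in> OK d" "y = of_int n * s' + g * t'"
      by (auto simp: gen_ideal2_def)
    have "x * y = g * (cnj g * s * s' + of_int n * s * t' + of_int n * t * s' + g * t * t')"
      unfolding st(3,6) using gg by (simp add: algebra_simps)
    moreover have "cnj g * s * s' + of_int n * s * t' + of_int n * t * s' + g * t * t' \<in> OK d"
      using st g by (intro OK_closed)
    ultimately show "x * y \<in> gen_ideal d g" by (simp add: gen_ideal_mem)
  qed
  have IP: "is_ideal d (ideal_mult d ?P ?P)" by (rule ideal_mult_ideal[OF I I])
  obtain \<sigma> \<tau> where st: "\<sigma> * a + \<tau> * n = 1" using bezout_int[of a n] cna by auto
  have "of_int a * g = (g + cnj g) * g" using tr by simp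
  also have "\<dots> = g * g + of_int n * of_int n" using gg by (simp add: algebra_simps)
  finally have ag: "of_int a * g = g * g + of_int n * of_int n" .
  have "g = (of_int \<sigma> * of_int a + of_int \<tau> * of_int n) * g"
    using arg_cong[OF st, of "of_int :: int \<Rightarrow> complex"] by simp
  also have "\<dots> = of_int \<sigma> * (of_int a * g) + of_int \<tau> * (of_int n * g)"
    by (simp add: algebra_simps)
  finally have g_eq: "g = of_int \<sigma> * (g * g + of_int n * of_int n) + of_int \<tau> * (of_int n * g)"
    by (simp only: ag)
  have m: "g * g \<in> ideal_mult d ?P ?P" "of_int n * of_int n \<in> ideal_mult d ?P ?P"
    "of_int n * g \<in> ideal_mult d ?P ?P"
    by (intro ideal_mult_mem gen_ideal2_left gen_ideal2_right)+
  have "g \<in> ideal_mult d ?P ?P"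
    by (subst g_eq) (rule ideal_add[OF IP ideal_of_int_mult[OF IP ideal_add[OF IP m(1,2)]]
        ideal_of_int_mult[OF IP m(3)]])
  then show "gen_ideal d g \<subseteq> ideal_mult d ?P ?P"
    using ideal_mult_right[OF IP] by (auto simp: gen_ideal_def)
qed

end

section \<open>The bijection \<open>\<theta>\<close>\<close>

locale imag_quadratic = squarefree_field +
  assumes d_ne_1: "d \<noteq> 1" and d_ne_3: "d \<noteq> 3"
begin

lemma d_ge_2: "d \<ge> 2"
  using d_pos d_ne_1 by simp

lemma norm_form_eq_1:
  assumes "norm_form d x y = 1"
  shows "y = 0 \<and> (x = 1 \<or> x = -1)"
proof -
  have big: "int d * omega_scale d ^ 2 > 4"
  proof (cases "d mod 4 = 3")
    case True
    then have "d \<ge> 7" using d_ne_3 by presburger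
    then show ?thesis using True by (simp add: omega_scale_def)
  qed (use d_ge_2 in \<open>simp add: omega_scale_def\<close>)
  have e: "4 = (2 * x + omega_trace d * y)^2 + int d * omega_scale d ^ 2 * y^2"
    using four_norm_form[of d x y] assms by (simp add: power_mult_distrib)
  have "y = 0"
  proof (rule ccontr)
    assume "y \<noteq> 0"
    then have "int d * omega_scale d ^ 2 * 1 \<le> int d * omega_scale d ^ 2 * y^2"
      by (intro mult_left_mono) (simp_all add: int_one_le_iff_zero_less)
    with big e show False by (smt (verit) zero_le_power2)
  qed
  with e have "x^2 = 1" by (simp add: power2_eq_square)
  then show ?thesis using \<open>y = 0\<close> by (simp add: power2_eq_1_iff)
qed

lemma OK_unit:
  assumes "r \<in> OK d" "r' \<in> OK d" "r * r' = 1"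
  shows "r = 1 \<or> r = -1"
proof -
  obtain x y x' y' where xy: "r = of_coords d x y" "r' = of_coords d x' y'"
    using assms(1,2) by (auto simp: OK_iff)
  have "(r * cnj r) * (r' * cnj r') = (r * r') * cnj (r * r')" by (simp add: algebra_simps)
  also have "\<dots> = 1" using assms(3) by simp
  finally have "(r * cnj r) * (r' * cnj r') = 1" .
  then have "of_int (norm_form d x y * norm_form d x' y') = (1::complex)"
    by (simp only: xy of_coords_mult_cnj of_int_mult)
  then have "norm_form d x y * norm_form d x' y' = 1" by (simp only: of_int_eq_1_iff)
  then have "norm_form d x y = 1 \<or> norm_form d x y = -1" using zmult_eq_1_iff by blast
  then have "norm_form d x y = 1" using norm_form_nonneg[of x y] by linarith
  from norm_form_eq_1[OF this] show ?thesis using xy by (auto simp: of_coords_def)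
qed

lemma norm_eq_if_associated:
  assumes "g \<in> OK d" "k > 0"
    and "g * cnj g \<in> gen_ideal d (of_int k)" "of_int k \<in> gen_ideal d (g * cnj g)"
  shows "g * cnj g = of_int k"
proof -
  obtain V W where VW: "V \<in> OK d" "W \<in> OK d" "g * cnj g = of_int k * V" "of_int k = g * cnj g * W"
    using assms(3,4) unfolding gen_ideal_def by blast
  have "of_int k * (V * W) = (g * cnj g) * W" by (simp add: VW(3) mult.assoc)
  also have "\<dots> = of_int k * 1" by (simp add: VW(4))
  finally have "V * W = 1" using assms(2) by simp
  then have "V = 1 \<or> V = -1" using OK_unit VW(1,2) by blast
  moreover have "V \<noteq> -1"
  proof
    assume "V = -1"
    obtain x y where "g = of_coords d x y" using assms(1) by (auto simp: OK_iff)
    then have "of_int (norm_form d x y) = (of_int (- k) :: complex)"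
      using VW(3) \<open>V = -1\<close> by (simp add: of_coords_mult_cnj)
    then have "norm_form d x y = - k" by (simp only: of_int_eq_iff)
    then show False using norm_form_nonneg[of x y] assms(2) by simp
  qed
  ultimately show ?thesis using VW(3) by simp
qed

lemma Jset_generator:
  assumes J: "P \<in> Jset d"
  obtains e g where "e > 1" "g \<in> OK d" "ideal_mult d P P = gen_ideal d g"
    "g * cnj g = of_int (e^2)" "P = gen_ideal2 d (of_int e) g" "ideal_norm d P = nat e"
proof -
  have I: "is_ideal d P" and nz: "P \<noteq> {0}" and nO: "P \<noteq> OK d"
    and cop: "coprime_ideals d P (cnj ` P)" using J by (auto simp: Jset_def)
  obtain g where g: "g \<in> OK d" "ideal_mult d P P = gen_ideal d g"
    using J by (auto simp: Jset_def principal_def gen_ideal_def)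
  obtain e c where e: "e > 0" and P: "P = lattice d e c" "e dvd norm_form d c 1"
    using ideal_eq_lattice[OF I nz cop] .
  have "e \<noteq> 1"
  proof
    assume "e = 1"
    then have "P = OK d" using P lattice_subset_OK by (auto simp: OK_iff lattice_mem)
    then show False using nO by simp
  qed
  with e have e1: "e > 1" by simp
  have "g * cnj g = of_int (e^2)"
  proof (rule norm_eq_if_associated[OF g(1)])
    show "g * cnj g \<in> gen_ideal d (of_int (e^2))"
      using norm_gen_in_gen_ideal_sq[OF P(2)] P(1) g(2) by simp
    show "of_int (e^2) \<in> gen_ideal d (g * cnj g)"
      using of_int_sq_in_gen_ideal_norm[OF cop _ g(2,1)] P(1) of_int_in_lattice_iff by simp
  qed (use e in simp)
  moreover have "P = gen_ideal2 d (of_int e) g" using lattice_eq_gen_ideal2[OF cop P g(2)] .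
  moreover have "ideal_norm d P = nat e" using ideal_norm_lattice[OF e] I P(1) by simp
  ultimately show ?thesis using that e1 g by blast
qed

lemma Jset_generator_pos_trace:
  assumes J: "P \<in> Jset d"
  obtains e g a where "e > 1" "g \<in> OK d" "ideal_mult d P P = gen_ideal d g"
    "g * cnj g = of_int (e^2)" "P = gen_ideal2 d (of_int e) g" "ideal_norm d P = nat e"
    "g + cnj g = of_int a" "a > 0" "coprime e a"
proof -
  obtain e g where e: "e > 1" and g: "g \<in> OK d" "ideal_mult d P P = gen_ideal d g"
    "g * cnj g = of_int (e^2)" "P = gen_ideal2 d (of_int e) g" "ideal_norm d P = nat e"
    using Jset_generator[OF J] .
  obtain gx gy where "g = of_coords d gx gy" using g(1) by (auto simp: OK_iff)
  then have T: "g + cnj g = of_int (2 * gx + omega_trace d * gy)" by (simp add: of_coords_add_cnj)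
  have cop: "coprime_ideals d (gen_ideal2 d (of_int e) g) (cnj ` gen_ideal2 d (of_int e) g)"
    using J g(4) by (simp add: Jset_def)
  have cT: "coprime e (2 * gx + omega_trace d * gy)" using coprime_norm_trace[OF cop g(1,3) T] .
  then have "2 * gx + omega_trace d * gy \<noteq> 0" using e by auto
  then consider "2 * gx + omega_trace d * gy > 0" | "- (2 * gx + omega_trace d * gy) > 0" by linarith
  then show ?thesis
  proof cases
    case 1
    then show ?thesis using that e g T cT by blast
  next
    case 2
    show ?thesis
    proof (rule that[of e "- g" "- (2 * gx + omega_trace d * gy)"])
      show "ideal_mult d P P = gen_ideal d (- g)" using g(2) by (simp only: gen_ideal_minus)
      show "P = gen_ideal2 d (of_int e) (- g)" using g(4) by (simp only: gen_ideal2_minus_right)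
      show "- g * cnj (- g) = of_int (e^2)" using g(3) by simp
      have "- g + cnj (- g) = - (g + cnj g)" by simp
      then show "- g + cnj (- g) = of_int (- (2 * gx + omega_trace d * gy))" by (simp only: T of_int_minus)
      show "coprime e (- (2 * gx + omega_trace d * gy))" using cT by (simp only: coprime_minus_right_iff)
    qed (use e g 2 OK_minus in auto)
  qed
qed

lemma gen_ideal_sqm_eq_imp_eq:
  assumes "a > 0" "a' > 0"
    and eq: "gen_ideal d (of_int a + of_int b * sqm d) = gen_ideal d (of_int a' + of_int b' * sqm d)"
  shows "a = a' \<and> b = b'"
proof -
  let ?x = "of_int a + of_int b * sqm d" and ?y = "of_int a' + of_int b' * sqm d"
  have "?x \<in> gen_ideal d ?y" using eq gen_ideal_self by blast
  then obtain r where r: "?x = ?y * r" "r \<in> OK d" by (auto simp: gen_ideal_def)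
  have "?y \<in> gen_ideal d ?x" using eq gen_ideal_self by blast
  then obtain r' where r': "?y = ?x * r'" "r' \<in> OK d" by (auto simp: gen_ideal_def)
  have "?x \<noteq> 0"
  proof
    assume "?x = 0"
    then have "Re ?x = 0" by simp
    then show False using assms(1) by simp
  qed
  moreover have "?x * 1 = ?x * (r' * r)" using r r' by (simp add: mult_ac)
  ultimately have "r' * r = 1" by (metis mult_cancel_left)
  then have "r = 1 \<or> r = -1" using OK_unit[OF r(2) r'(2)] by (simp add: mult.commute)
  moreover have "r \<noteq> -1"
  proof
    assume "r = -1"
    then have "Re ?x = - Re ?y" using r by simp
    then show False using assms(1,2) by simp
  qed
  ultimately have "?x = ?y" using r by simp
  then show ?thesis using sqm_coords_inj[OF d_pos] by blast
qed

lemma ab_of_eqI: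
  assumes "a > 0" "two_sq d P = gen_ideal d (of_int a + of_int b * sqm d)"
  shows "ab_of d P = (a, b)"
  unfolding ab_of_def
proof (rule the_equality)
  show "case (a, b) of (a, b) \<Rightarrow> 0 < a \<and> two_sq d P = {(of_int a + of_int b * sqm d) * x |x. x \<in> OK d}"
    using assms by (simp add: gen_ideal_def)
  fix p assume p: "case p of (a, b) \<Rightarrow> 0 < a \<and> two_sq d P = {(of_int a + of_int b * sqm d) * x |x. x \<in> OK d}"
  obtain a' b' where pab: "p = (a', b')" by (cases p)
  have "a' > 0" "gen_ideal d (of_int a' + of_int b' * sqm d) = gen_ideal d (of_int a + of_int b * sqm d)"
    using p assms by (simp_all add: pab gen_ideal_def)
  then show "p = (a, b)" using gen_ideal_sqm_eq_imp_eq[OF _ assms(1)] by (simp add: pab)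
qed

lemma two_sq_eq_gen_ideal:
  "g \<in> OK d \<Longrightarrow> ideal_mult d P P = gen_ideal d g \<Longrightarrow> two_sq d P = gen_ideal d (2 * g)"
  unfolding two_sq_def using ideal_mult_gen_ideal[of 2 g] by (simp add: gen_ideal_def[symmetric])

lemma theta_JsetE:
  assumes J: "P \<in> Jset d"
  obtains n a b where "theta d P = (n, a, b)" "(n, a, b) \<in> primitive_solutions d"
    "P = gen_ideal2 d (of_int n) ((of_int a + of_int b * sqm d) / 2)"
proof -
  obtain e g a where e: "e > 1" and g: "g \<in> OK d" "ideal_mult d P P = gen_ideal d g"
    "g * cnj g = of_int (e^2)" "P = gen_ideal2 d (of_int e) g" "ideal_norm d P = nat e"
    and a: "g + cnj g = of_int a" "a > 0" "coprime e a"
    using Jset_generator_pos_trace[OF J] .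
  obtain gx gy where gxy: "g = of_coords d gx gy" using g(1) by (auto simp: OK_iff)
  have "of_int a = g + cnj g" using a(1) by simp
  also have "\<dots> = of_int (2 * gx + omega_trace d * gy)" by (simp only: gxy of_coords_add_cnj)
  finally have a_eq: "a = 2 * gx + omega_trace d * gy" by (simp only: of_int_eq_iff)
  define b where "b = omega_scale d * gy"
  have N: "norm_form d gx gy = e^2" using g(3) by (simp add: gxy of_coords_mult_cnj flip: of_int_power)
  have two_g: "of_int a + of_int b * sqm d = 2 * g" by (simp add: gxy two_of_coords a_eq b_def)
  have "gy \<noteq> 0"
  proof
    assume "gy = 0"
    then have "gx^2 = e^2" using N by (simp add: norm_form_def)
    then have "e dvd a" using \<open>gy = 0\<close> by (auto simp: a_eq power2_eq_iff)
    then show False using a(3) e by (simp add: coprime_absorb_left)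
  qed
  then have "b \<noteq> 0" using omega_scale_pos[of d] by (simp add: b_def)
  moreover have "4 * e^2 = a^2 + int d * b^2"
    using four_norm_form[of d gx gy] by (simp only: N a_eq b_def)
  ultimately have "is_solution d (e, a, b)" using e a(2) by (simp add: is_solution_def)
  moreover have "ab_of d P = (a, b)"
    using ab_of_eqI[OF a(2)] two_sq_eq_gen_ideal[OF g(1,2)] two_g by simp
  then have "theta d P = (e, a, b)" using g(5) e by (simp add: theta_def)
  moreover have "gcd e a = 1" using a(3) by simp
  moreover have "P = gen_ideal2 d (of_int e) ((of_int a + of_int b * sqm d) / 2)"
    using g(4) two_g by simp
  ultimately show ?thesis using that by (simp add: primitive_solutions_def)
qed

lemma inj_on_theta: "inj_on (theta d) (Jset d)"
proof
  fix P Q assume P: "P \<in> Jset d" and Q: "Q \<in> Jset d" and eq: "theta d P = theta d Q"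
  obtain n a b where "theta d P = (n, a, b)" "P = gen_ideal2 d (of_int n) ((of_int a + of_int b * sqm d) / 2)"
    using theta_JsetE[OF P] by blast
  moreover obtain n' a' b' where "theta d Q = (n', a', b')"
    "Q = gen_ideal2 d (of_int n') ((of_int a' + of_int b' * sqm d) / 2)"
    using theta_JsetE[OF Q] by blast
  ultimately show "P = Q" using eq by simp
qed

lemma solution_n_ne_1: "\<not> is_solution d (1, a, b)"
proof
  assume "is_solution d (1, a, b)"
  then have a: "a > 0" and b: "b \<noteq> 0" and eq: "4 = a^2 + int d * b^2" by (auto simp: is_solution_def)
  have b1: "b^2 \<ge> 1" using b by (simp add: int_one_le_iff_zero_less)
  then have "int d * 1 \<le> int d * b^2" by (intro mult_left_mono) simp_all
  then have "a^2 \<le> 2" using eq d_ge_2 by linarith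
  have "a < 2"
  proof (rule ccontr)
    assume "\<not> a < 2"
    then have "a * a \<ge> 2 * 2" by (intro mult_mono) simp_all
    then show False using \<open>a^2 \<le> 2\<close> by (simp add: power2_eq_square)
  qed
  then have "a = 1" using a by simp
  then have "int d * b^2 = 3" using eq by simp
  moreover have "int d * b^2 \<ge> 2 * 2" if "b^2 \<noteq> 1"
    using that b1 d_ge_2 by (intro mult_mono) simp_all
  ultimately show False using d_ne_3 by (cases "b^2 = 1") simp_all
qed

lemma theta_surj:
  assumes s: "s \<in> primitive_solutions d"
  shows "\<exists>P \<in> Jset d. theta d P = s"
proof -
  obtain n a b where s_eq: "s = (n, a, b)" by (cases s)
  have sol: "is_solution d (n, a, b)" and "gcd n a = 1"
    using s by (simp_all add: s_eq primitive_solutions_def)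
  then have cna: "coprime n a" by (simp add: coprime_iff_gcd_eq_1)
  have n0: "n > 0" and a0: "a > 0" using sol by (auto simp: is_solution_def)
  obtain gx gy where ab: "a = 2 * gx + omega_trace d * gy" "b = omega_scale d * gy"
    and N: "norm_form d gx gy = n^2" and cgn: "coprime gy n"
    by (rule primitive_solution_generator[OF sol cna])
  define g where "g = of_coords d gx gy"
  have g: "g \<in> OK d" by (simp add: g_def of_coords_in_OK)
  have gg: "g * cnj g = of_int n * of_int n" using N by (simp add: g_def of_coords_mult_cnj power2_eq_square)
  have tr: "g + cnj g = of_int a" by (simp add: g_def of_coords_add_cnj ab)
  have two_g: "2 * g = of_int a + of_int b * sqm d" by (simp add: g_def two_of_coords ab)
  define P where "P = gen_ideal2 d (of_int n) g"
  obtain c where P: "P = lattice d n c" "n dvd norm_form d c 1" "coprime n (2 * c + omega_trace d)"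
    using gen_ideal2_eq_lattice[OF N cgn] cna unfolding P_def g_def ab(1) by blast
  have I: "is_ideal d P" using P ideal_lattice by simp
  have P2: "ideal_mult d P P = gen_ideal d g"
    unfolding P_def using ideal_mult_gen_ideal2_self[OF g gg tr] cna coprime_commute by blast
  have "n \<noteq> 1" using sol solution_n_ne_1 by blast
  then have "\<not> n dvd 1" using n0 by (simp add: zdvd1_eq)
  then have "of_int 1 \<notin> P" unfolding P(1) of_int_in_lattice_iff .
  then have "P \<noteq> OK d" using OK_of_int[of 1] by metis
  moreover have "of_int n \<in> P" unfolding P(1) of_int_in_lattice_iff by simp
  then have "P \<noteq> {0}" using n0 by (metis of_int_eq_0_iff singletonD less_irrefl)
  moreover have "principal d (ideal_mult d P P)"
    unfolding principal_def P2 gen_ideal_def using g by blast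
  moreover have "coprime_ideals d P (cnj ` P)" unfolding P(1) by (rule coprime_ideals_lattice[OF P(3)])
  ultimately have "P \<in> Jset d" using I unfolding Jset_def by blast
  moreover have "ideal_norm d P = nat n" using ideal_norm_lattice[OF n0] I P(1) by simp
  moreover have "ab_of d P = (a, b)"
    using ab_of_eqI[OF a0] two_sq_eq_gen_ideal[OF g P2] two_g by simp
  ultimately have "theta d P = s" using n0 by (simp add: theta_def s_eq)
  with \<open>P \<in> Jset d\<close> show ?thesis by blast
qed

lemma bij_betw_theta: "bij_betw (theta d) (Jset d) (primitive_solutions d)"
  unfolding bij_betw_def
proof
  show "inj_on (theta d) (Jset d)" by (rule inj_on_theta)
  show "theta d ` Jset d = primitive_solutions d"
  proof
    show "theta d ` Jset d \<subseteq> primitive_solutions d"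
      using theta_JsetE by (metis image_subsetI)
    show "primitive_solutions d \<subseteq> theta d ` Jset d"
      using theta_surj by blast
  qed
qed

end

section \<open>The minimum \<open>F(d)\<close>\<close>

definition least_solution :: "nat \<Rightarrow> nat" where
  "least_solution d = (LEAST n::nat. \<exists>a b. is_solution d (int n, a, b))"

context imag_quadratic
begin

lemma least_solution_is_solution: "\<exists>a b. is_solution d (int (least_solution d), a, b)"
proof -
  have "is_solution d (int (d + 1), 2 * (int d - 1), 4)"
    using d_ge_2 by (simp add: is_solution_def power2_eq_square algebra_simps)
  then have "\<exists>n a b. is_solution d (int n, a, b)" by blast
  then show ?thesis unfolding least_solution_def by (rule LeastI_ex)
qed

lemma least_solution_le: "is_solution d (int n, a, b) \<Longrightarrow> least_solution d \<le> n"
  unfolding least_solution_def by (rule Least_le) blast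

text \<open>A common prime factor \<open>p\<close> of \<open>n\<close> and \<open>a\<close> also divides \<open>b\<close> since \<open>d\<close> is squarefree,
  and dividing by \<open>p\<close> gives a smaller solution; so a least solution is primitive.\<close>

lemma least_solution_primitive:
  obtains a b where "(int (least_solution d), a, b) \<in> primitive_solutions d"
proof -
  obtain a b where sol: "is_solution d (int (least_solution d), a, b)" using least_solution_is_solution by blast
  let ?n = "int (least_solution d)"
  have n0: "?n > 0" and a0: "a > 0" and b0: "b \<noteq> 0" and eq: "4 * ?n^2 = a^2 + int d * b^2"
    using sol by (auto simp: is_solution_def)
  have "coprime ?n a"
  proof (rule ccontr)
    assume "\<not> coprime ?n a"
    then obtain q where q: "q dvd ?n" "q dvd a" "\<not> is_unit q" by (rule not_coprimeE)
    have "q \<noteq> 0" using q(1) n0 by auto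
    then obtain p where p: "p dvd q" "prime p" using prime_divisor_exists q(3) by blast
    have pn: "p dvd ?n" and pa: "p dvd a" using p q dvd_trans by blast+
    have pb: "p dvd b"
    proof (rule ccontr)
      assume "\<not> p dvd b"
      have "p^2 dvd 4 * ?n^2 - a^2" using pn pa by (simp add: power2_eq_square mult_dvd_mono)
      then have "p^2 dvd int d * b^2" using eq by simp
      moreover have "coprime (p^2) (b^2)" using \<open>\<not> p dvd b\<close> p(2) by (simp add: prime_imp_coprime)
      ultimately have "p^2 dvd int d" by (simp add: coprime_dvd_mult_left_iff)
      then have "\<bar>p\<bar> = 1" using squarefree_square_dvd[OF squarefree] by blast
      then show False using p(2) by auto
    qed
    obtain n' a' b' where n': "?n = p * n'" and a': "a = p * a'" and b': "b = p * b'"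
      using pn pa pb by (auto elim!: dvdE)
    have p1: "p > 1" using p(2) by (simp add: prime_int_iff)
    have "p^2 * (4 * n'^2) = p^2 * (a'^2 + int d * b'^2)"
      using eq by (simp add: n' a' b' power_mult_distrib algebra_simps)
    then have "is_solution d (int (nat n'), a', b')"
      using n0 a0 b0 p1 by (auto simp: is_solution_def n' a' b' zero_less_mult_iff)
    then have "least_solution d \<le> nat n'" by (rule least_solution_le)
    moreover have "n' > 0" using n0 p1 n' by (simp add: zero_less_mult_iff)
    moreover have "n' < ?n" using n' p1 n0 by (simp add: mult_less_cancel_right1 zero_less_mult_iff)
    ultimately show False by linarith
  qed
  then show ?thesis using that sol by (simp add: primitive_solutions_def coprime_iff_gcd_eq_1)
qed

text \<open>\<open>mz = x + y\<omega>\<close> has norm \<open>m\<^sup>2\<close>; here \<open>y \<noteq> 0\<close> because \<open>z\<close> is not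
  real, and \<open>2x + tr(\<omega>) y \<noteq> 0\<close> because \<open>d\<close> is not a square.\<close>

lemma K1_multiple_solution:
  assumes z: "z \<in> K1 d - roots_unity d" and m: "m > 0" "of_nat m * z \<in> OK d"
  shows "\<exists>a b. is_solution d (int m, a, b)"
proof -
  have zK: "z * cnj z = 1" using z by (simp add: K1_def)
  have zR: "z ^ k \<noteq> 1" if "k > 0" for k
    using z that unfolding roots_unity_def K1_def by blast
  obtain x y where xy: "of_nat m * z = of_coords d x y" using m(2) OK_iff by blast
  have "of_coords d x y * cnj (of_coords d x y) = of_nat m * of_nat m"
    using zK by (simp flip: xy add: algebra_simps)
  then have "norm_form d x y = int m * int m"
    by (metis of_coords_mult_cnj of_int_eq_iff of_int_mult of_int_of_nat_eq)
  then have N: "4 * (int m)^2 = (2 * x + omega_trace d * y)^2 + int d * (omega_scale d * y)^2"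
    using four_norm_form[of d x y] by (simp add: power2_eq_square)
  have y0: "y \<noteq> 0"
  proof
    assume "y = 0"
    then have "z = of_int x / of_nat m" using xy m(1) by (simp add: of_coords_def field_simps)
    then have "z ^ 2 = 1" using zK by (simp add: power2_eq_square)
    then show False using zR[of 2] by simp
  qed
  have A0: "2 * x + omega_trace d * y \<noteq> 0"
  proof
    assume "2 * x + omega_trace d * y = 0"
    then have "int d * (omega_scale d * y)^2 = (2 * int m)^2" using N by (simp add: power2_eq_square)
    moreover have "omega_scale d * y \<noteq> 0" using y0 omega_scale_pos[of d] by simp
    ultimately have "d = 1" by (rule squarefree_mult_square_eq_square)
    then show False using d_ne_1 by simp
  qed
  then have "is_solution d (int m, \<bar>2 * x + omega_trace d * y\<bar>, omega_scale d * y)"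
    using m(1) y0 omega_scale_pos[of d] N by (simp add: is_solution_def)
  then show ?thesis by blast
qed

lemma least_solution_attained: "\<exists>z \<in> K1 d - roots_unity d. dz d z = least_solution d"
proof -
  obtain a b where "(int (least_solution d), a, b) \<in> primitive_solutions d"
    by (rule least_solution_primitive)
  then obtain P where J: "P \<in> Jset d" and th: "theta d P = (int (least_solution d), a, b)"
    using theta_surj by blast
  obtain e g where e: "e > 1" and g: "g \<in> OK d" "g * cnj g = of_int (e^2)"
    "P = gen_ideal2 d (of_int e) g" "ideal_norm d P = nat e"
    using Jset_generator[OF J] by metis
  have cop: "coprime_ideals d P (cnj ` P)" and nO: "P \<noteq> OK d" using J by (auto simp: Jset_def)
  define z where "z = cnj g / of_int e"
  have D: "denom_ideal d z = P" unfolding z_def using denom_ideal_cnj_div[OF cop g(3,1,2)] e by simp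
  have "z \<in> QF d" unfolding z_def using OK_cnj[OF g(1)] by (intro QF_divide_of_int) (simp add: OK_def)
  moreover have "z * cnj z = 1" using g(2) e by (simp add: z_def field_simps power2_eq_square)
  moreover have "z \<notin> roots_unity d"
  proof
    assume "z \<in> roots_unity d"
    then have "z \<in> OK d" using \<open>z \<in> QF d\<close> algebraic_int_root_of_unity
      by (auto simp: roots_unity_def OK_def)
    then have "1 \<in> denom_ideal d z" by (simp add: denom_ideal_def)
    moreover have "is_ideal d P" using J by (simp add: Jset_def)
    ultimately have "P = OK d" using D ideal_eq_OK_if_one by simp
    then show False using nO by simp
  qed
  moreover have "dz d z = least_solution d" using D g(4) th e by (simp add: dz_def theta_def)
  ultimately show ?thesis by (auto simp: K1_def)
qed

lemma least_solution_le_dz: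
  assumes z: "z \<in> K1 d - roots_unity d"
  shows "least_solution d \<le> dz d z"
proof -
  let ?D = "denom_ideal d z"
  have I: "is_ideal d ?D"
    using ideal_colon[OF ideal_OK, of "{z}"] by (simp add: denom_ideal_def)
  obtain M where M: "M > 0" "of_int M * z \<in> OK d"
    using QF_denominator[OF squarefree] z by (auto simp: K1_def)
  then have "of_int M \<in> ?D" by (simp add: denom_ideal_def)
  then obtain e where e: "e > 0" "\<And>k. of_int k \<in> ?D \<longleftrightarrow> e dvd k"
    using ideal_int_part[OF I] M(1) by (metis less_irrefl)
  then have "of_nat (nat e) * z \<in> OK d" by (simp add: denom_ideal_def)
  then have "least_solution d \<le> nat e"
    using K1_multiple_solution[OF z] e(1) least_solution_le by (metis zero_less_nat_eq)
  also have "nat e \<le> ideal_norm d ?D" by (rule int_le_ideal_norm[OF I e])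
  finally show ?thesis by (simp add: dz_def)
qed

lemma Fd_eq_least_solution: "Fd d = least_solution d"
  unfolding Fd_def
proof (rule Least_equality)
  show "\<exists>z\<in>K1 d - roots_unity d. least_solution d = dz d z" using least_solution_attained by metis
  show "\<And>m. \<exists>z\<in>K1 d - roots_unity d. m = dz d z \<Longrightarrow> least_solution d \<le> m"
    using least_solution_le_dz by blast
qed

end

theorem lemma29:
  fixes d :: nat
  assumes "d > 0" and "squarefree d" and "d \<noteq> 1" and "d \<noteq> 3"
  shows "bij_betw (theta d) (Jset d) (primitive_solutions d)
     \<and> Fd d = (LEAST n::nat. \<exists>a b. is_solution d (int n, a, b))"
proof -
  interpret imag_quadratic d
    using assms by unfold_locales
  show ?thesis
    using bij_betw_theta Fd_eq_least_solution by (simp add: least_solution_def)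
qed

end
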